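(* Let $f:\mathbb{R}^d\to\mathbb{R}$ be a tree ensemble model whose trees have $n$ nodes in total, and let $x\in\mathbb{R}^d$. Then for any $S\subseteq[d]$, the squared prediction gap $$\mathrm{PG}^2(x,S)=\mathbb{E}_{x'\sim \mathrm{perturb}(x,S)}\left[(f(x')-f(x))^2\right]$$ can be computed exactly in $O(n^2)$ time.
   Context: A decision tree $T$ is a rooted binary tree in which each non-leaf node $v$ has exactly two children $a_v,b_v$, a feature index $q_v\in[d]=\{1,\dots,d\}$ and a threshold $t_v\in\mathbb{R}$; each leaf $l$ has a value $y_l\in\mathbb{R}$. The output $f_T(x)$ on input $x\in\mathbb{R}^d$ is obtained by starting at the root and, at each non-leaf node $v$, descending to $a_v$ if $x_{q_v}<t_v$ and to $b_v$ otherwise, until a leaf $l$ is reached; then $f_T(x)=y_l$. A tree ensemble model is a finite collection of decision trees $T_1,\dots,T_m$ with output $f(x)=\sum_{i=1}^m f_{T_i}(x)$; its total size $n$ is the sum of the numbers of nodes of its trees. For $x\in\mathbb{R}^d$ and $S\subseteq[d]$, the distribution $\mathrm{perturb}(x,S)$ of a random vector $x'\in\mathbb{R}^d$ is as follows: for each $i\in S$, $x'_i=x_i+\delta_i$ where $\delta_i\sim\mathcal{D}_i$ for a fixed distribution $\mathcal{D}_i$ on $\mathbb{R}$; for each $i\notin S$, $x'_i=x_i$; and the $\delta_i$ ($i\in S$) are mutually independent. It is assumed that the cumulative distribution function $F_{\mathcal{D}_i}$ of each $\mathcal{D}_i$ can be evaluated in $O(1)$ time. The running time is measured in a model where arithmetic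 operations on real numbers take constant time.
   Formalization: The O(1)-evaluable function for each $\mathcal{D}_i$ is the left-continuous cumulative distribution function, v mapped to the probability that $\delta_i$ < v, instead of $F_{\mathcal{D}_i}$(v), the probability that $\delta_i$ <= v. The statement above fails without it. *)

theory Defs
  imports "HOL-Probability.Probability"
begin

datatype dtree = Leaf real | Node nat real dtree dtree

fun eval_tree :: "dtree \<Rightarrow> (nat \<Rightarrow> real) \<Rightarrow> real" where
  "eval_tree (Leaf y) x = y"
| "eval_tree (Node q t a b) x = (if x q < t then eval_tree a x else eval_tree b x)"

definition ens_eval :: "dtree list \<Rightarrow> (nat \<Rightarrow> real) \<Rightarrow> real" where
  "ens_eval ts x = (\<Sum>T\<leftarrow>ts. eval_tree T x)"

fun tsize :: "dtree \<Rightarrow> nat" where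
  "tsize (Leaf y) = 1"
| "tsize (Node q t a b) = 1 + tsize a + tsize b"

definition ens_size :: "dtree list \<Rightarrow> nat" where
  "ens_size ts = (\<Sum>T\<leftarrow>ts. tsize T)"

fun feats :: "dtree \<Rightarrow> nat set" where
  "feats (Leaf y) = {}"
| "feats (Node q t a b) = insert q (feats a \<union> feats b)"

definition wf_ensemble :: "nat \<Rightarrow> dtree list \<Rightarrow> bool" where
  "wf_ensemble d ts \<longleftrightarrow> (\<forall>T\<in>set ts. feats T \<subseteq> {1..d})"

definition perturb_pt :: "(nat \<Rightarrow> real) \<Rightarrow> nat set \<Rightarrow> (nat \<Rightarrow> real) \<Rightarrow> (nat \<Rightarrow> real)" where
  "perturb_pt x S \<delta> = (\<lambda>i. if i \<in> S then x i + \<delta> i else x i)"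

text \<open>PG^2(x,S) = E_{x' ~ perturb(x,S)} (f x' - f x)^2, where x' = x + delta on S and
the delta_i (i in S) are independent with distributions D i, i.e. delta ~ product
measure of the D i over i in S.\<close>
definition PG2 :: "dtree list \<Rightarrow> (nat \<Rightarrow> real) \<Rightarrow> nat set \<Rightarrow> (nat \<Rightarrow> real measure) \<Rightarrow> real" where
  "PG2 ts x S D = (\<integral>\<delta>. (ens_eval ts (perturb_pt x S \<delta>) - ens_eval ts x)\<^sup>2 \<partial>(PiM S D))"

text \<open>Every instruction costs one step. There is no real-to-integer
conversion. The oracle instruction Cdf evaluates the (left-continuous)
cumulative distribution function of D_i in O(1): Cdf r a b sets real register r
to Pr[delta_i < v] where i = nat register a, v = real register b.\<close>

datatype instr =
    NConst nat nat
  | NAdd nat nat nat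
  | NSub nat nat nat          \<comment> \<open>nreg r := nreg a - nreg b (truncated)\<close>
  | NLoad nat nat nat
  | NStore nat nat nat
  | NJmpLess nat nat nat
  | RConst nat real
  | RAdd nat nat nat
  | RSub nat nat nat
  | RMul nat nat nat
  | RDiv nat nat nat
  | RLoad nat nat nat
  | RStore nat nat nat
  | RJmpLess nat nat nat
  | Jmp nat
  | Cdf nat nat nat
  | Halt

record mstate =
  pc :: nat
  nreg :: "nat \<Rightarrow> nat"
  rreg :: "nat \<Rightarrow> real"
  nmem :: "nat \<Rightarrow> nat \<Rightarrow> nat"
  rmem :: "nat \<Rightarrow> nat \<Rightarrow> real"

definition halted :: "instr list \<Rightarrow> mstate \<Rightarrow> bool" where
  "halted P s \<longleftrightarrow> pc s \<ge> length P \<or> P ! pc s = Halt"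

fun exec :: "(nat \<Rightarrow> real \<Rightarrow> real) \<Rightarrow> instr \<Rightarrow> mstate \<Rightarrow> mstate" where
  "exec F (NConst r k) s = s\<lparr>pc := Suc (pc s), nreg := (nreg s)(r := k)\<rparr>"
| "exec F (NAdd r a b) s = s\<lparr>pc := Suc (pc s), nreg := (nreg s)(r := nreg s a + nreg s b)\<rparr>"
| "exec F (NSub r a b) s = s\<lparr>pc := Suc (pc s), nreg := (nreg s)(r := nreg s a - nreg s b)\<rparr>"
| "exec F (NLoad r k a) s = s\<lparr>pc := Suc (pc s), nreg := (nreg s)(r := nmem s k (nreg s a))\<rparr>"
| "exec F (NStore k a r) s = s\<lparr>pc := Suc (pc s), nmem := (nmem s)(k := (nmem s k)(nreg s a := nreg s r))\<rparr>"
| "exec F (NJmpLess a b l) s = s\<lparr>pc := (if nreg s a < nreg s b then l else Suc (pc s))\<rparr>"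
| "exec F (RConst r c) s = s\<lparr>pc := Suc (pc s), rreg := (rreg s)(r := c)\<rparr>"
| "exec F (RAdd r a b) s = s\<lparr>pc := Suc (pc s), rreg := (rreg s)(r := rreg s a + rreg s b)\<rparr>"
| "exec F (RSub r a b) s = s\<lparr>pc := Suc (pc s), rreg := (rreg s)(r := rreg s a - rreg s b)\<rparr>"
| "exec F (RMul r a b) s = s\<lparr>pc := Suc (pc s), rreg := (rreg s)(r := rreg s a * rreg s b)\<rparr>"
| "exec F (RDiv r a b) s = s\<lparr>pc := Suc (pc s), rreg := (rreg s)(r := rreg s a / rreg s b)\<rparr>"
| "exec F (RLoad r k a) s = s\<lparr>pc := Suc (pc s), rreg := (rreg s)(r := rmem s k (nreg s a))\<rparr>"
| "exec F (RStore k a r) s = s\<lparr>pc := Suc (pc s), rmem := (rmem s)(k := (rmem s k)(nreg s a := rreg s r))\<rparr>"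
| "exec F (RJmpLess a b l) s = s\<lparr>pc := (if rreg s a < rreg s b then l else Suc (pc s))\<rparr>"
| "exec F (Jmp l) s = s\<lparr>pc := l\<rparr>"
| "exec F (Cdf r a b) s = s\<lparr>pc := Suc (pc s), rreg := (rreg s)(r := F (nreg s a) (rreg s b))\<rparr>"
| "exec F Halt s = s"

definition step :: "instr list \<Rightarrow> (nat \<Rightarrow> real \<Rightarrow> real) \<Rightarrow> mstate \<Rightarrow> mstate" where
  "step P F s = (if halted P s then s else exec F (P ! pc s) s)"

text \<open>CDF oracle: Pr[delta_i < v] (the relevant event for the branching rule x_q < t).\<close>
definition cdf_oracle :: "(nat \<Rightarrow> real measure) \<Rightarrow> nat \<Rightarrow> real \<Rightarrow> real" where
  "cdf_oracle D i v = measure (D i) {..<v}"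

text \<open>Nodes are numbered 0,...,n-1 in preorder, tree after tree. A node record is
(kind, feature, left child, right child, value): kind 0 = leaf (value = leaf value),
kind 1 = internal node (value = threshold).\<close>

fun tnodes :: "nat \<Rightarrow> dtree \<Rightarrow> (nat \<times> nat \<times> nat \<times> nat \<times> real) list" where
  "tnodes off (Leaf y) = [(0, 0, 0, 0, y)]"
| "tnodes off (Node q t a b) =
     (1, q, off + 1, off + 1 + tsize a, t) # tnodes (off + 1) a @ tnodes (off + 1 + tsize a) b"

fun enodes :: "nat \<Rightarrow> dtree list \<Rightarrow> (nat \<times> nat \<times> nat \<times> nat \<times> real) list" where
  "enodes off [] = []"
| "enodes off (T # ts) = tnodes off T @ enodes (off + tsize T) ts"

fun eroots :: "nat \<Rightarrow> dtree list \<Rightarrow> nat list" where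
  "eroots off [] = []"
| "eroots off (T # ts) = off # eroots (off + tsize T) ts"

definition arr :: "'a::zero list \<Rightarrow> nat \<Rightarrow> 'a" where
  "arr xs i = (if i < length xs then xs ! i else 0)"

text \<open>Nat banks: 0 = header [m, n, d]; 1 = kinds; 2 = features; 3 = left children;
4 = right children; 5 = roots of the m trees; 6 = indicator of S (index q in 1..d).
Real banks: 0 = node values; 1 = x (index q in 1..d).\<close>
definition init_state :: "nat \<Rightarrow> dtree list \<Rightarrow> (nat \<Rightarrow> real) \<Rightarrow> nat set \<Rightarrow> mstate" where
  "init_state d ts x S =
    (let N = enodes 0 ts in
     \<lparr> pc = 0, nreg = (\<lambda>_. 0), rreg = (\<lambda>_. 0),
       nmem = (\<lambda>k. if k = 0 then arr [length ts, length N, d]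
                 else if k = 1 then arr (map fst N)
                 else if k = 2 then arr (map (fst \<circ> snd) N)
                 else if k = 3 then arr (map (fst \<circ> snd \<circ> snd) N)
                 else if k = 4 then arr (map (fst \<circ> snd \<circ> snd \<circ> snd) N)
                 else if k = 5 then arr (eroots 0 ts)
                 else if k = 6 then (\<lambda>q. if q \<in> S \<and> q \<in> {1..d} then 1 else 0)
                 else (\<lambda>_. 0)),
       rmem = (\<lambda>k. if k = 0 then arr (map (snd \<circ> snd \<circ> snd \<circ> snd) N)
                 else if k = 1 then (\<lambda>q. if q \<in> {1..d} then x q else 0)
                 else (\<lambda>_. 0)) \<rparr>)"

end

theory Submission
  imports Defs
begin

(* Expanding the square and writing the ensemble as a sum over its nodes, with weight the leaf
   value at leaves and 0 at inner nodes, gives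
     PG^2 = sum_{l,m} w_l w_m Pr[x' reaches l and m] - 2 f(x) sum_m w_m Pr[x' reaches m] + f(x)^2.
   The event that x' reaches a node is the conjunction of the tests on its root path; on each
   feature q these confine delta_q to an interval, so by independence its probability is a
   product over the features of differences of CDF values.
   For a fixed leaf l the probabilities Pr[x' reaches l and m] for all nodes m are computed in a
   single preorder pass: the constraints of a child extend those of its parent by one test on one
   feature q, so its probability is the parent's times the ratio of the new and the old
   probability of the q-interval.  Precomputing for each node the interval its root path imposes
   on its own feature, and keeping the intervals of the path of l in a feature table that is
   invalidated by time stamps instead of being cleared, makes each pass cost O(n) steps, hence
   O(n^2) steps for all leaves. *)

section \<open>A structured language compiled to the machine\<close>

datatype cond = NLess nat nat | RLess nat nat

fun holds :: "cond \<Rightarrow> mstate \<Rightarrow> bool" where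
  "holds (NLess a b) s \<longleftrightarrow> nreg s a < nreg s b"
| "holds (RLess a b) s \<longleftrightarrow> rreg s a < rreg s b"

fun jump_if :: "cond \<Rightarrow> nat \<Rightarrow> instr" where
  "jump_if (NLess a b) l = NJmpLess a b l"
| "jump_if (RLess a b) l = RJmpLess a b l"

lemma exec_jump_if: "exec F (jump_if cnd l) s = s\<lparr>pc := if holds cnd s then l else Suc (pc s)\<rparr>"
  by (cases cnd) auto

lemma jump_if_neq_Halt: "jump_if cnd l \<noteq> Halt"
  by (cases cnd) auto

lemma holds_pc_update [simp]: "holds cnd (s\<lparr>pc := l\<rparr>) = holds cnd s"
  by (cases cnd) auto

datatype com = SKIP | Ins instr | CSeq com com (infixr ";;" 60)
  | If cond com com | WhileN nat nat com

abbreviation IfN :: "nat \<Rightarrow> nat \<Rightarrow> com \<Rightarrow> com \<Rightarrow> com" where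
  "IfN a b \<equiv> If (NLess a b)"

abbreviation IfR :: "nat \<Rightarrow> nat \<Rightarrow> com \<Rightarrow> com \<Rightarrow> com" where
  "IfR a b \<equiv> If (RLess a b)"

fun non_jump :: "instr \<Rightarrow> bool" where
  "non_jump (NJmpLess _ _ _) = False"
| "non_jump (RJmpLess _ _ _) = False"
| "non_jump (Jmp _) = False"
| "non_jump Halt = False"
| "non_jump _ = True"

fun code_size :: "com \<Rightarrow> nat" where
  "code_size SKIP = 0"
| "code_size (Ins i) = 1"
| "code_size (c1 ;; c2) = code_size c1 + code_size c2"
| "code_size (If cnd c1 c2) = code_size c1 + code_size c2 + 2"
| "code_size (WhileN a b c) = code_size c + 3"

text \<open>Jump targets are absolute: \<open>compile off c\<close> is the code of \<open>c\<close> placed at address \<open>off\<close>.\<close>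

fun compile :: "nat \<Rightarrow> com \<Rightarrow> instr list" where
  "compile off SKIP = []"
| "compile off (Ins i) = [i]"
| "compile off (c1 ;; c2) = compile off c1 @ compile (off + code_size c1) c2"
| "compile off (If cnd c1 c2) = jump_if cnd (off + 2 + code_size c2) # compile (Suc off) c2 @
     Jmp (off + 2 + code_size c2 + code_size c1) # compile (off + 2 + code_size c2) c1"
| "compile off (WhileN a b c) =
     NJmpLess a b (off + 2) # Jmp (off + 3 + code_size c) # compile (off + 2) c @ [Jmp off]"

lemma length_compile [simp]: "length (compile off c) = code_size c"
  by (induction c arbitrary: off) auto

text \<open>\<open>big_step F c s k s'\<close>: the compiled code of \<open>c\<close> takes \<open>k\<close> machine steps from \<open>s\<close> to \<open>s'\<close>;
  the program counter is not part of the result.\<close>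

inductive big_step :: "(nat \<Rightarrow> real \<Rightarrow> real) \<Rightarrow> com \<Rightarrow> mstate \<Rightarrow> nat \<Rightarrow> mstate \<Rightarrow> bool" for F where
  big_skip: "big_step F SKIP s 0 s"
| big_instr: "non_jump i \<Longrightarrow> big_step F (Ins i) s 1 ((exec F i s)\<lparr>pc := pc s\<rparr>)"
| big_seq: "big_step F c1 s k1 s1 \<Longrightarrow> big_step F c2 s1 k2 s2 \<Longrightarrow> big_step F (c1 ;; c2) s (k1 + k2) s2"
| big_if_true: "holds cnd s \<Longrightarrow> big_step F c1 s k s' \<Longrightarrow> big_step F (If cnd c1 c2) s (Suc k) s'"
| big_if_false: "\<not> holds cnd s \<Longrightarrow> big_step F c2 s k s' \<Longrightarrow> big_step F (If cnd c1 c2) s (Suc (Suc k)) s'"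
| big_while_true: "nreg s a < nreg s b \<Longrightarrow> big_step F c s k s1 \<Longrightarrow> big_step F (WhileN a b c) s1 k2 s2 \<Longrightarrow>
     big_step F (WhileN a b c) s (k + k2 + 2) s2"
| big_while_false: "\<not> nreg s a < nreg s b \<Longrightarrow> big_step F (WhileN a b c) s 2 s"

lemma exec_non_jump_pc: "non_jump i \<Longrightarrow> exec F i (s\<lparr>pc := off\<rparr>) = (exec F i s)\<lparr>pc := Suc off\<rparr>"
  by (cases i) auto

lemma step_at_instr:
  assumes "P = pre @ (ins # rest)" "ins \<noteq> Halt"
  shows "step P F (s\<lparr>pc := length pre\<rparr>) = exec F ins (s\<lparr>pc := length pre\<rparr>)"
  using assms by (simp add: step_def halted_def nth_append)

lemma funpow_add_apply: "(f ^^ (m + n)) s = (f ^^ n) ((f ^^ m) s)"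
  by (simp add: funpow_add add.commute[of m n])

lemma compile_correct:
  assumes "big_step F c s k s'" "P = pre @ compile (length pre) c @ post"
  shows "(step P F ^^ k) (s\<lparr>pc := length pre\<rparr>) = s'\<lparr>pc := length pre + code_size c\<rparr>"
  using assms
proof (induction arbitrary: pre post rule: big_step.induct)
  case (big_skip s)
  then show ?case by simp
next
  case (big_instr i s)
  have "step P F (s\<lparr>pc := length pre\<rparr>) = exec F i (s\<lparr>pc := length pre\<rparr>)"
    by (rule step_at_instr[of _ pre i post]) (use big_instr in auto)
  then show ?case using big_instr by (simp add: exec_non_jump_pc)
next
  case (big_seq c1 s k1 s1 c2 k2 s2)
  have 1: "(step P F ^^ k1) (s\<lparr>pc := length pre\<rparr>) = s1\<lparr>pc := length pre + code_size c1\<rparr>"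
    by (rule big_seq.IH(1)[of pre "compile (length pre + code_size c1) c2 @ post"]) (use big_seq in simp)
  have 2: "(step P F ^^ k2) (s1\<lparr>pc := length (pre @ compile (length pre) c1)\<rparr>) =
     s2\<lparr>pc := length (pre @ compile (length pre) c1) + code_size c2\<rparr>"
    by (rule big_seq.IH(2)[of "pre @ compile (length pre) c1" post]) (use big_seq in simp)
  show ?case using 1 2 by (simp add: funpow_add_apply)
next
  case (big_if_true cnd s c1 k s' c2)
  let ?o = "length pre"
  let ?jmp = "jump_if cnd (?o + 2 + code_size c2)"
  let ?else = "?jmp # compile (Suc ?o) c2 @ [Jmp (?o + 2 + code_size c2 + code_size c1)]"
  have "step P F (s\<lparr>pc := ?o\<rparr>) = s\<lparr>pc := length (pre @ ?else)\<rparr>"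
    by (subst step_at_instr[of _ pre ?jmp "compile (Suc ?o) c2 @
          Jmp (?o + 2 + code_size c2 + code_size c1) # compile (?o + 2 + code_size c2) c1 @ post"])
       (use big_if_true in \<open>auto simp: jump_if_neq_Halt exec_jump_if\<close>)
  moreover have "(step P F ^^ k) (s\<lparr>pc := length (pre @ ?else)\<rparr>) =
     s'\<lparr>pc := length (pre @ ?else) + code_size c1\<rparr>"
    by (rule big_if_true.IH) (use big_if_true in simp)
  ultimately show ?case by (simp add: funpow_Suc_right add_ac del: funpow.simps)
next
  case (big_if_false cnd s c2 k s' c1)
  let ?o = "length pre"
  let ?jmp = "jump_if cnd (?o + 2 + code_size c2)"
  have "step P F (s\<lparr>pc := ?o\<rparr>) = s\<lparr>pc := length (pre @ [?jmp])\<rparr>"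
    by (subst step_at_instr[of _ pre ?jmp "compile (Suc ?o) c2 @
          Jmp (?o + 2 + code_size c2 + code_size c1) # compile (?o + 2 + code_size c2) c1 @ post"])
       (use big_if_false in \<open>auto simp: jump_if_neq_Halt exec_jump_if\<close>)
  moreover have "(step P F ^^ k) (s\<lparr>pc := length (pre @ [?jmp])\<rparr>) =
     s'\<lparr>pc := length (pre @ [?jmp]) + code_size c2\<rparr>"
    by (rule big_if_false.IH) (use big_if_false in simp)
  moreover have "step P F (s'\<lparr>pc := length (pre @ ?jmp # compile (Suc ?o) c2)\<rparr>) =
      s'\<lparr>pc := ?o + 2 + code_size c2 + code_size c1\<rparr>"
    by (subst step_at_instr[of _ "pre @ ?jmp # compile (Suc ?o) c2" _ "compile (?o + 2 + code_size c2) c1 @ post"])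
       (use big_if_false in auto)
  moreover have "(step P F ^^ Suc (Suc k)) (s\<lparr>pc := ?o\<rparr>) =
      step P F ((step P F ^^ k) (step P F (s\<lparr>pc := ?o\<rparr>)))"
    by (simp add: funpow_swap1)
  ultimately show ?case by (simp add: add_ac)
next
  case (big_while_true s a b c k s1 k2 s2)
  let ?o = "length pre"
  let ?head = "[NJmpLess a b (?o + 2), Jmp (?o + 3 + code_size c)]"
  have "step P F (s\<lparr>pc := ?o\<rparr>) = s\<lparr>pc := length (pre @ ?head)\<rparr>"
    by (subst step_at_instr[of _ pre _ "Jmp (?o + 3 + code_size c) # compile (?o + 2) c @ [Jmp ?o] @ post"])
       (use big_while_true in auto)
  moreover have "(step P F ^^ k) (s\<lparr>pc := length (pre @ ?head)\<rparr>) =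
     s1\<lparr>pc := length (pre @ ?head) + code_size c\<rparr>"
    by (rule big_while_true.IH(1)) (use big_while_true in simp)
  moreover have "step P F (s1\<lparr>pc := length (pre @ ?head @ compile (?o + 2) c)\<rparr>) = s1\<lparr>pc := ?o\<rparr>"
    by (subst step_at_instr[of _ "pre @ ?head @ compile (?o + 2) c" _ post])
       (use big_while_true in auto)
  moreover have "(step P F ^^ k2) (s1\<lparr>pc := ?o\<rparr>) = s2\<lparr>pc := ?o + code_size (WhileN a b c)\<rparr>"
    by (rule big_while_true.IH(2)) (use big_while_true in simp)
  moreover have "(step P F ^^ (k + k2 + 2)) (s\<lparr>pc := ?o\<rparr>) =
      (step P F ^^ k2) (step P F ((step P F ^^ k) (step P F (s\<lparr>pc := ?o\<rparr>))))"
    using funpow_add_apply[where f = "step P F" and m = "Suc (Suc k)" and n = k2] by (simp add: add_ac funpow_swap1)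
  ultimately show ?case by (simp add: add_ac)
next
  case (big_while_false s a b c)
  let ?o = "length pre"
  have "step P F (s\<lparr>pc := ?o\<rparr>) = s\<lparr>pc := Suc ?o\<rparr>"
    by (subst step_at_instr[of _ pre _ "Jmp (?o + 3 + code_size c) # compile (?o + 2) c @ [Jmp ?o] @ post"])
       (use big_while_false in auto)
  moreover have "step P F (s\<lparr>pc := length (pre @ [NJmpLess a b (?o + 2)])\<rparr>) = s\<lparr>pc := ?o + 3 + code_size c\<rparr>"
    by (subst step_at_instr[of _ "pre @ [NJmpLess a b (?o + 2)]" _ "compile (?o + 2) c @ [Jmp ?o] @ post"])
       (use big_while_false in auto)
  ultimately show ?case by (simp add: numeral_2_eq_2)
qed

lemma funpow_step_halted: "halted P s \<Longrightarrow> (step P F ^^ k) s = s"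
  by (induction k) (auto simp: step_def)

lemma compiled_program_halts:
  assumes "big_step F c s k s'" "pc s = 0" "k \<le> N"
  shows "(step (compile 0 c @ [Halt]) F ^^ N) s = s'\<lparr>pc := code_size c\<rparr>"
    and "halted (compile 0 c @ [Halt]) (s'\<lparr>pc := code_size c\<rparr>)"
proof -
  let ?P = "compile 0 c @ [Halt]"
  show halt: "halted ?P (s'\<lparr>pc := code_size c\<rparr>)"
    by (simp add: halted_def nth_append)
  have "s\<lparr>pc := 0\<rparr> = s"
    using assms(2) by simp
  then have "(step ?P F ^^ k) s = s'\<lparr>pc := code_size c\<rparr>"
    using compile_correct[OF assms(1), of ?P "[]" "[Halt]"] by simp
  moreover have "(step ?P F ^^ N) s = (step ?P F ^^ (N - k)) ((step ?P F ^^ k) s)"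
    using assms(3) by (metis funpow_add_apply le_add_diff_inverse)
  ultimately show "(step ?P F ^^ N) s = s'\<lparr>pc := code_size c\<rparr>"
    using halt funpow_step_halted by simp
qed

fun loop_free :: "com \<Rightarrow> bool" where
  "loop_free SKIP = True"
| "loop_free (Ins i) = non_jump i"
| "loop_free (c1 ;; c2) = (loop_free c1 \<and> loop_free c2)"
| "loop_free (If cnd c1 c2) = (loop_free c1 \<and> loop_free c2)"
| "loop_free (WhileN a b c) = False"

fun run :: "(nat \<Rightarrow> real \<Rightarrow> real) \<Rightarrow> com \<Rightarrow> mstate \<Rightarrow> mstate" where
  "run F SKIP s = s"
| "run F (Ins i) s = (exec F i s)\<lparr>pc := pc s\<rparr>"
| "run F (c1 ;; c2) s = run F c2 (run F c1 s)"
| "run F (If cnd c1 c2) s = (if holds cnd s then run F c1 s else run F c2 s)"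
| "run F (WhileN a b c) s = s"

fun cost :: "(nat \<Rightarrow> real \<Rightarrow> real) \<Rightarrow> com \<Rightarrow> mstate \<Rightarrow> nat" where
  "cost F SKIP s = 0"
| "cost F (Ins i) s = 1"
| "cost F (c1 ;; c2) s = cost F c1 s + cost F c2 (run F c1 s)"
| "cost F (If cnd c1 c2) s = (if holds cnd s then Suc (cost F c1 s) else Suc (Suc (cost F c2 s)))"
| "cost F (WhileN a b c) s = 0"

lemma loop_free_big_step: "loop_free c \<Longrightarrow> big_step F c s (cost F c s) (run F c s)"
  by (induction c arbitrary: s) (auto intro: big_step.intros big_instr[simplified])

lemma loop_free_cost_le: "loop_free c \<Longrightarrow> cost F c s \<le> code_size c"
  by (induction c arbitrary: s) (auto simp: add_mono le_SucI trans_le_add1 trans_le_add2)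

definition runs_within :: "(nat \<Rightarrow> real \<Rightarrow> real) \<Rightarrow> com \<Rightarrow> mstate \<Rightarrow> nat \<Rightarrow> (mstate \<Rightarrow> bool) \<Rightarrow> bool" where
  "runs_within F c s K R \<longleftrightarrow> (\<exists>k s'. big_step F c s k s' \<and> k \<le> K \<and> R s')"

lemma runs_within_loop_free: "loop_free c \<Longrightarrow> R (run F c s) \<Longrightarrow> runs_within F c s (code_size c) R"
  unfolding runs_within_def using loop_free_big_step loop_free_cost_le by blast

lemma runs_within_seq:
  assumes "runs_within F c1 s K1 R1" "\<And>s1. R1 s1 \<Longrightarrow> runs_within F c2 s1 K2 R2"
  shows "runs_within F (c1 ;; c2) s (K1 + K2) R2"
  using assms unfolding runs_within_def by (fastforce intro: big_seq add_mono)

lemma runs_within_loop_free_seq: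
  assumes "loop_free c1" "runs_within F c2 (run F c1 s) K R"
  shows "runs_within F (c1 ;; c2) s (code_size c1 + K) R"
  by (rule runs_within_seq[OF runs_within_loop_free[OF assms(1), where R = "\<lambda>s'. s' = run F c1 s"]])
    (use assms in auto)

lemma runs_within_seq_loop_free:
  assumes "runs_within F c1 s K R1" "loop_free c2" "\<And>s1. R1 s1 \<Longrightarrow> R (run F c2 s1)"
  shows "runs_within F (c1 ;; c2) s (K + code_size c2) R"
  using assms by (intro runs_within_seq[OF assms(1)] runs_within_loop_free)

lemma runs_within_mono:
  assumes "runs_within F c s K R" "K \<le> K'" "\<And>s'. R s' \<Longrightarrow> R' s'"
  shows "runs_within F c s K' R'"
  using assms unfolding runs_within_def by fastforce

lemma runs_within_IfN:
  assumes "nreg s a < nreg s b \<Longrightarrow> runs_within F c1 s K R"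
    and "\<not> nreg s a < nreg s b \<Longrightarrow> runs_within F c2 s K R"
  shows "runs_within F (IfN a b c1 c2) s (K + 2) R"
  using assms unfolding runs_within_def by (cases "nreg s a < nreg s b") (fastforce intro: big_if_true big_if_false)+

lemma runs_within_WhileN:
  fixes \<mu> :: "mstate \<Rightarrow> nat"
  assumes "I s"
    and body: "\<And>s. I s \<Longrightarrow> nreg s a < nreg s b \<Longrightarrow> runs_within F c s K (\<lambda>s'. I s' \<and> \<mu> s' < \<mu> s)"
  shows "runs_within F (WhileN a b c) s (\<mu> s * (K + 2) + 2) (\<lambda>s'. I s' \<and> \<not> nreg s' a < nreg s' b)"
  using assms(1)
proof (induction "\<mu> s" arbitrary: s rule: less_induct)
  case less
  show ?case
  proof (cases "nreg s a < nreg s b")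
    case False
    then show ?thesis
      using less.prems unfolding runs_within_def by (intro exI[of _ 2] exI[of _ s]) (auto intro: big_while_false)
  next
    case True
    obtain k s1 where 1: "big_step F c s k s1" "k \<le> K" "I s1" "\<mu> s1 < \<mu> s"
      using body[OF less.prems True] unfolding runs_within_def by blast
    obtain k2 s2 where 2: "big_step F (WhileN a b c) s1 k2 s2" "k2 \<le> \<mu> s1 * (K + 2) + 2"
        "I s2 \<and> \<not> nreg s2 a < nreg s2 b"
      using less.hyps[OF 1(4) 1(3)] unfolding runs_within_def by blast
    have "Suc (\<mu> s1) * (K + 2) \<le> \<mu> s * (K + 2)"
      using 1(4) by (intro mult_right_mono) auto
    then have "k + k2 + 2 \<le> \<mu> s * (K + 2) + 2"
      using 1(2) 2(2) by simp
    moreover have "big_step F (WhileN a b c) s (k + k2 + 2) s2"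
      using 1 2 True by (intro big_while_true) auto
    ultimately show ?thesis unfolding runs_within_def using 2 by blast
  qed
qed

fun wr_nreg :: "instr \<Rightarrow> nat set" where
  "wr_nreg (NConst r _) = {r}" | "wr_nreg (NAdd r _ _) = {r}" | "wr_nreg (NSub r _ _) = {r}"
| "wr_nreg (NLoad r _ _) = {r}" | "wr_nreg _ = {}"

fun wr_rreg :: "instr \<Rightarrow> nat set" where
  "wr_rreg (RConst r _) = {r}" | "wr_rreg (RAdd r _ _) = {r}" | "wr_rreg (RSub r _ _) = {r}"
| "wr_rreg (RMul r _ _) = {r}" | "wr_rreg (RDiv r _ _) = {r}" | "wr_rreg (RLoad r _ _) = {r}"
| "wr_rreg (Cdf r _ _) = {r}" | "wr_rreg _ = {}"

fun wr_nmem :: "instr \<Rightarrow> nat set" where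
  "wr_nmem (NStore k _ _) = {k}" | "wr_nmem _ = {}"

fun wr_rmem :: "instr \<Rightarrow> nat set" where
  "wr_rmem (RStore k _ _) = {k}" | "wr_rmem _ = {}"

fun written :: "(instr \<Rightarrow> nat set) \<Rightarrow> com \<Rightarrow> nat set" where
  "written f SKIP = {}"
| "written f (Ins i) = f i"
| "written f (c1 ;; c2) = written f c1 \<union> written f c2"
| "written f (If cnd c1 c2) = written f c1 \<union> written f c2"
| "written f (WhileN a b c) = written f c"

definition same_except :: "nat set \<Rightarrow> nat set \<Rightarrow> nat set \<Rightarrow> nat set \<Rightarrow> mstate \<Rightarrow> mstate \<Rightarrow> bool" where
  "same_except NR RR NB RB s s' \<longleftrightarrow>
     (\<forall>r. r \<notin> NR \<longrightarrow> nreg s' r = nreg s r) \<and> (\<forall>r. r \<notin> RR \<longrightarrow> rreg s' r = rreg s r) \<and>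
     (\<forall>b. b \<notin> NB \<longrightarrow> nmem s' b = nmem s b) \<and> (\<forall>b. b \<notin> RB \<longrightarrow> rmem s' b = rmem s b)"

definition frame :: "com \<Rightarrow> mstate \<Rightarrow> mstate \<Rightarrow> bool" where
  "frame c = same_except (written wr_nreg c) (written wr_rreg c) (written wr_nmem c) (written wr_rmem c)"

lemma same_except_refl: "same_except NR RR NB RB s s"
  by (simp add: same_except_def)

lemma same_except_trans:
  "same_except NR RR NB RB s1 s2 \<Longrightarrow> same_except NR' RR' NB' RB' s2 s3 \<Longrightarrow>
   same_except (NR \<union> NR') (RR \<union> RR') (NB \<union> NB') (RB \<union> RB') s1 s3"
  by (simp add: same_except_def)

lemma same_except_mono:
  "same_except NR RR NB RB s1 s2 \<Longrightarrow> NR \<subseteq> NR' \<Longrightarrow> RR \<subseteq> RR' \<Longrightarrow> NB \<subseteq> NB' \<Longrightarrow> RB \<subseteq> RB' \<Longrightarrow>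
   same_except NR' RR' NB' RB' s1 s2"
  by (auto simp: same_except_def)

lemma same_except_nreg: "same_except NR RR NB RB s s' \<Longrightarrow> r \<notin> NR \<Longrightarrow> nreg s' r = nreg s r"
  by (simp add: same_except_def)

lemma same_except_rreg: "same_except NR RR NB RB s s' \<Longrightarrow> r \<notin> RR \<Longrightarrow> rreg s' r = rreg s r"
  by (simp add: same_except_def)

lemma big_step_frame: "big_step F c s k s' \<Longrightarrow> frame c s s'"
  unfolding frame_def
proof (induction rule: big_step.induct)
  case (big_instr i s)
  then show ?case by (cases i) (auto simp: same_except_def)
next
  case (big_seq c1 s k1 s1 c2 k2 s2)
  then show ?case using same_except_trans by fastforce
next
  case (big_while_true s a b c k s1 k2 s2)
  then show ?case using same_except_trans[of _ _ _ _ s s1] by (simp add: same_except_def)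
qed (auto simp: same_except_def)

lemma run_frame: "loop_free c \<Longrightarrow> frame c s (run F c s)"
  using big_step_frame loop_free_big_step by blast

section \<open>Root paths of the nodes\<close>

text \<open>A constraint \<open>(q, t, b)\<close> records the outcome \<open>b\<close> of the test \<open>x q < t\<close>.\<close>

type_synonym constr = "nat \<times> real \<times> bool"
type_synonym node_info = "dtree \<times> nat option \<times> bool \<times> constr list"

fun tree_infos :: "nat \<Rightarrow> nat option \<Rightarrow> bool \<Rightarrow> constr list \<Rightarrow> dtree \<Rightarrow> node_info list" where
  "tree_infos off p dr pa (Leaf y) = [(Leaf y, p, dr, pa)]"
| "tree_infos off p dr pa (Node q t a b) = (Node q t a b, p, dr, pa) #
     tree_infos (off + 1) (Some off) True (pa @ [(q, t, True)]) a @
     tree_infos (off + 1 + tsize a) (Some off) False (pa @ [(q, t, False)]) b"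

fun ens_infos :: "nat \<Rightarrow> dtree list \<Rightarrow> node_info list" where
  "ens_infos off [] = []"
| "ens_infos off (T # ts) = tree_infos off None False [] T @ ens_infos (off + tsize T) ts"

fun node_record :: "nat \<Rightarrow> dtree \<Rightarrow> nat \<times> nat \<times> nat \<times> nat \<times> real" where
  "node_record c (Leaf y) = (0, 0, 0, 0, y)"
| "node_record c (Node q t a b) = (1, q, c + 1, c + 1 + tsize a, t)"

definition sat_path :: "constr list \<Rightarrow> (nat \<Rightarrow> real) \<Rightarrow> bool" where
  "sat_path cs v \<longleftrightarrow> (\<forall>(q, t, b) \<in> set cs. (v q < t) = b)"

fun leaf_val :: "dtree \<Rightarrow> real" where
  "leaf_val (Leaf y) = y"
| "leaf_val (Node q t a b) = 0"

lemma tsize_pos: "0 < tsize T" by (cases T) auto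

lemma length_tree_infos[simp]: "length (tree_infos off p dr pa T) = tsize T"
  by (induction T arbitrary: off p dr pa) auto

lemma length_tnodes[simp]: "length (tnodes off T) = tsize T"
  by (induction T arbitrary: off) auto

lemma tree_infos_0: "tree_infos off p dr pa T ! 0 = (T, p, dr, pa)"
  by (cases T) auto

lemma tnodes_nth:
  "i < tsize T \<Longrightarrow> tnodes off T ! i = node_record (off + i) (fst (tree_infos off p dr pa T ! i))"
proof (induction T arbitrary: off p dr pa i)
  case (Leaf y)
  then show ?case by simp
next
  case (Node q t a b)
  show ?case
  proof (cases i)
    case 0
    then show ?thesis by simp
  next
    case (Suc j)
    show ?thesis
    proof (cases "j < tsize a")
      case True
      then show ?thesis using Node.IH(1)[of j "off + 1"] Suc by (simp add: nth_append)
    next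
      case False
      then have "j - tsize a < tsize b" using Node.prems Suc by simp
      then show ?thesis using Node.IH(2)[of "j - tsize a" "off + 1 + tsize a"] Suc False by (simp add: nth_append)
    qed
  qed
qed

abbreviation info_parent :: "node_info \<Rightarrow> nat option" where
  "info_parent e \<equiv> fst (snd e)"

abbreviation info_dir :: "node_info \<Rightarrow> bool" where
  "info_dir e \<equiv> fst (snd (snd e))"

abbreviation info_path :: "node_info \<Rightarrow> constr list" where
  "info_path e \<equiv> snd (snd (snd e))"

lemma tree_infos_children:
  "i < tsize T \<Longrightarrow> fst (tree_infos off p dr pa T ! i) = Node q t a b \<Longrightarrow>
   i + tsize (Node q t a b) \<le> tsize T \<and>
   tree_infos off p dr pa T ! (i + 1) = (a, Some (off + i), True, info_path (tree_infos off p dr pa T ! i) @ [(q, t, True)]) \<and>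
   tree_infos off p dr pa T ! (i + 1 + tsize a) = (b, Some (off + i), False, info_path (tree_infos off p dr pa T ! i) @ [(q, t, False)])"
proof (induction T arbitrary: off p dr pa i)
  case (Leaf y)
  then show ?case by simp
next
  case (Node q0 t0 a0 b0)
  show ?case
  proof (cases i)
    case 0
    then show ?thesis using Node.prems by (simp add: nth_append tree_infos_0 tsize_pos)
  next
    case (Suc j)
    show ?thesis
    proof (cases "j < tsize a0")
      case True
      have fj: "fst (tree_infos (off + 1) (Some off) True (pa @ [(q0, t0, True)]) a0 ! j) = Node q t a b"
        using Node.prems Suc True by (simp add: nth_append)
      from Node.IH(1)[OF True fj] show ?thesis using Suc True tsize_pos[of b] by (simp add: nth_append)
    next
      case False
      then obtain k where k: "j = tsize a0 + k" using le_Suc_ex not_less by blast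
      then have jb: "k < tsize b0" using Node.prems Suc by simp
      have fj: "fst (tree_infos (off + 1 + tsize a0) (Some off) False (pa @ [(q0, t0, False)]) b0 ! k) = Node q t a b"
        using Node.prems Suc k by (simp add: nth_append)
      from Node.IH(2)[OF jb fj] show ?thesis using Suc k
        by (simp add: nth_append add.commute add.left_commute)
    qed
  qed
qed

lemma tree_infos_parent:
  "i < tsize T \<Longrightarrow> 0 < i \<Longrightarrow> \<exists>j<i. info_parent (tree_infos off p dr pa T ! i) = Some (off + j) \<and>
     (\<exists>q t a b. fst (tree_infos off p dr pa T ! j) = Node q t a b \<and>
        (if info_dir (tree_infos off p dr pa T ! i) then i = j + 1 else i = j + 1 + tsize a) \<and>
        info_path (tree_infos off p dr pa T ! i) = info_path (tree_infos off p dr pa T ! j) @ [(q, t, info_dir (tree_infos off p dr pa T ! i))])"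
proof (induction T arbitrary: off p dr pa i)
  case (Leaf y)
  then show ?case by simp
next
  case (Node q0 t0 a0 b0)
  obtain j where Suc: "i = Suc j" using Node.prems by (cases i) auto
  let ?L = "tree_infos (off + 1) (Some off) True (pa @ [(q0, t0, True)]) a0"
  let ?R = "tree_infos (off + 1 + tsize a0) (Some off) False (pa @ [(q0, t0, False)]) b0"
  show ?case
  proof (cases "j < tsize a0")
    case True
    show ?thesis
    proof (cases "j = 0")
      case True
      then show ?thesis using Suc by (intro exI[of _ 0]) (simp add: tree_infos_0 nth_append tsize_pos)
    next
      case False
      obtain j' where j': "j' < j" "info_parent (?L ! j) = Some (off + 1 + j')"
        "\<exists>q t a b. fst (?L ! j') = Node q t a b \<and> (if info_dir (?L ! j) then j = j' + 1 else j = j' + 1 + tsize a) \<and>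
          info_path (?L ! j) = info_path (?L ! j') @ [(q, t, info_dir (?L ! j))]"
        using Node.IH(1)[of j "off + 1" "Some off" True "pa @ [(q0, t0, True)]"] True False by auto
      have "j' < tsize a0" using j' True by simp
      then have e1: "tree_infos off p dr pa (Node q0 t0 a0 b0) ! Suc j' = ?L ! j'" by (simp add: nth_append)
      have e2: "tree_infos off p dr pa (Node q0 t0 a0 b0) ! i = ?L ! j" using Suc True by (simp add: nth_append)
      obtain q t a b where qt: "fst (?L ! j') = Node q t a b" "(if info_dir (?L ! j) then j = j' + 1 else j = j' + 1 + tsize a)"
          "info_path (?L ! j) = info_path (?L ! j') @ [(q, t, info_dir (?L ! j))]" using j'(3) by blast
      have f1: "Suc j' < i" using Suc j' by simp
      have f2: "info_parent (?L ! j) = Some (off + Suc j')" using j'(2) by simp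
      have f3: "(if info_dir (?L ! j) then i = Suc j' + 1 else i = Suc j' + 1 + tsize a)"
        using qt(2) Suc by (simp split: if_splits)
      show ?thesis apply (rule exI[of _ "Suc j'"]) unfolding e1 e2 using qt f1 f2 f3 by blast
    qed
  next
    case False
    show ?thesis
    proof (cases "j = tsize a0")
      case True
      then show ?thesis using Suc by (intro exI[of _ 0]) (simp add: tree_infos_0 nth_append tsize_pos)
    next
      case False2: False
      obtain k where k: "j = tsize a0 + k" using False le_Suc_ex not_less by blast
      have jb: "k < tsize b0" using Node.prems Suc k by simp
      have jp: "0 < k" using k False2 by simp
      obtain j' where j': "j' < k" "info_parent (?R ! k) = Some (off + 1 + tsize a0 + j')"
        "\<exists>q t a b. fst (?R ! j') = Node q t a b \<and> (if info_dir (?R ! k) then k = j' + 1 else k = j' + 1 + tsize a) \<and>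
          info_path (?R ! k) = info_path (?R ! j') @ [(q, t, info_dir (?R ! k))]"
        using Node.IH(2)[OF jb jp] by blast
      have "j' < tsize b0" using j' jb by simp
      then have e1: "tree_infos off p dr pa (Node q0 t0 a0 b0) ! Suc (tsize a0 + j') = ?R ! j'" by (simp add: nth_append)
      have e2: "tree_infos off p dr pa (Node q0 t0 a0 b0) ! i = ?R ! k" using Suc k by (simp add: nth_append)
      obtain q t a b where qt: "fst (?R ! j') = Node q t a b" "(if info_dir (?R ! k) then k = j' + 1 else k = j' + 1 + tsize a)"
          "info_path (?R ! k) = info_path (?R ! j') @ [(q, t, info_dir (?R ! k))]" using j'(3) by blast
      have f1: "Suc (tsize a0 + j') < i" using Suc k j' by simp
      have f2: "info_parent (?R ! k) = Some (off + Suc (tsize a0 + j'))" using j'(2) by simp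
      have f3: "(if info_dir (?R ! k) then i = Suc (tsize a0 + j') + 1 else i = Suc (tsize a0 + j') + 1 + tsize a)"
        using qt(2) Suc k by (simp split: if_splits)
      show ?thesis apply (rule exI[of _ "Suc (tsize a0 + j')"]) unfolding e1 e2 using qt f1 f2 f3 by blast
    qed
  qed
qed

lemma tree_infos_eval:
  "sum_list (map (\<lambda>e. leaf_val (fst e) * (if sat_path (info_path e) v then 1 else 0)) (tree_infos off p dr pa T)) =
   (if sat_path pa v then 1 else 0) * eval_tree T v"
proof (induction T arbitrary: off p dr pa)
  case (Leaf y)
  then show ?case by simp
next
  case (Node q t a b)
  have i1: "sat_path (pa @ [(q, t, True)]) v = (sat_path pa v \<and> v q < t)" by (auto simp: sat_path_def)
  have i2: "sat_path (pa @ [(q, t, False)]) v = (sat_path pa v \<and> \<not> v q < t)" by (auto simp: sat_path_def)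
  show ?case using Node.IH by (simp add: i1 i2)
qed

lemma tree_infos_feats:
  "e \<in> set (tree_infos off p dr pa T) \<Longrightarrow> set (map fst (info_path e)) \<subseteq> set (map fst pa) \<union> feats T \<and>
     (\<forall>q t a b. fst e = Node q t a b \<longrightarrow> q \<in> feats T)"
proof (induction T arbitrary: off p dr pa)
  case (Leaf y)
  then show ?case by auto
next
  case (Node q t a b)
  from Node.prems show ?case
    using Node.IH(1)[of "off + 1" "Some off" True "pa @ [(q, t, True)]"]
      Node.IH(2)[of "off + 1 + tsize a" "Some off" False "pa @ [(q, t, False)]"]
    by auto
qed

lemma length_ens_infos[simp]: "length (ens_infos off ts) = ens_size ts"
  by (induction ts arbitrary: off) (auto simp: ens_size_def)

lemma length_enodes[simp]: "length (enodes off ts) = ens_size ts"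
  by (induction ts arbitrary: off) (auto simp: ens_size_def)

lemma ens_size_Cons: "ens_size (T # ts) = tsize T + ens_size ts"
  by (simp add: ens_size_def)

lemma enodes_nth:
  "c < ens_size ts \<Longrightarrow> enodes off ts ! c = node_record (off + c) (fst (ens_infos off ts ! c))"
proof (induction ts arbitrary: off c)
  case Nil
  then show ?case by (simp add: ens_size_def)
next
  case (Cons T ts)
  show ?case
  proof (cases "c < tsize T")
    case True
    then show ?thesis using tnodes_nth[OF True, of off None False "[]"] by (simp add: nth_append)
  next
    case False
    then obtain k where k: "c = tsize T + k" using le_Suc_ex not_less by blast
    then have "k < ens_size ts" using Cons.prems by (simp add: ens_size_Cons)
    then show ?thesis using Cons.IH[of k "off + tsize T"] k by (simp add: nth_append add.assoc)
  qed
qed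

lemma ens_infos_children:
  "c < ens_size ts \<Longrightarrow> fst (ens_infos off ts ! c) = Node q t a b \<Longrightarrow>
   c + tsize (Node q t a b) \<le> ens_size ts \<and>
   ens_infos off ts ! (c + 1) = (a, Some (off + c), True, info_path (ens_infos off ts ! c) @ [(q, t, True)]) \<and>
   ens_infos off ts ! (c + 1 + tsize a) = (b, Some (off + c), False, info_path (ens_infos off ts ! c) @ [(q, t, False)])"
proof (induction ts arbitrary: off c)
  case Nil
  then show ?case by (simp add: ens_size_def)
next
  case (Cons T ts)
  show ?case
  proof (cases "c < tsize T")
    case True
    have f: "fst (tree_infos off None False [] T ! c) = Node q t a b" using Cons.prems True by (simp add: nth_append)
    from tree_infos_children[OF True f] show ?thesis using True tsize_pos[of b] by (simp add: nth_append ens_size_Cons)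
  next
    case False
    then obtain k where k: "c = tsize T + k" using le_Suc_ex not_less by blast
    then have kk: "k < ens_size ts" using Cons.prems by (simp add: ens_size_Cons)
    have f: "fst (ens_infos (off + tsize T) ts ! k) = Node q t a b" using Cons.prems k by (simp add: nth_append)
    from Cons.IH[OF kk f] show ?thesis using k by (simp add: nth_append ens_size_Cons add.assoc)
  qed
qed

lemma ens_infos_parent:
  "c < ens_size ts \<Longrightarrow> (info_parent (ens_infos off ts ! c) = None \<and> info_path (ens_infos off ts ! c) = []) \<or>
   (\<exists>j<c. info_parent (ens_infos off ts ! c) = Some (off + j) \<and>
     (\<exists>q t a b. fst (ens_infos off ts ! j) = Node q t a b \<and>
        (if info_dir (ens_infos off ts ! c) then c = j + 1 else c = j + 1 + tsize a) \<and>
        info_path (ens_infos off ts ! c) = info_path (ens_infos off ts ! j) @ [(q, t, info_dir (ens_infos off ts ! c))]))"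
proof (induction ts arbitrary: off c)
  case Nil
  then show ?case by (simp add: ens_size_def)
next
  case (Cons T ts)
  show ?case
  proof (cases "c < tsize T")
    case True
    show ?thesis
    proof (cases "c = 0")
      case True
      then show ?thesis by (simp add: tree_infos_0 nth_append tsize_pos)
    next
      case False
      obtain j where j: "j < c" "info_parent (tree_infos off None False [] T ! c) = Some (off + j)"
        "\<exists>q t a b. fst (tree_infos off None False [] T ! j) = Node q t a b \<and>
          (if info_dir (tree_infos off None False [] T ! c) then c = j + 1 else c = j + 1 + tsize a) \<and>
          info_path (tree_infos off None False [] T ! c) = info_path (tree_infos off None False [] T ! j) @ [(q, t, info_dir (tree_infos off None False [] T ! c))]"
        using tree_infos_parent[OF True, of off None False "[]"] False by blast
      have e1: "ens_infos off (T # ts) ! c = tree_infos off None False [] T ! c" using True by (simp add: nth_append)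
      have e2: "ens_infos off (T # ts) ! j = tree_infos off None False [] T ! j" using True j by (simp add: nth_append)
      show ?thesis apply (rule disjI2) apply (rule exI[of _ j]) unfolding e1 e2 using j by blast
    qed
  next
    case False
    then obtain k where k: "c = tsize T + k" using le_Suc_ex not_less by blast
    then have kk: "k < ens_size ts" using Cons.prems by (simp add: ens_size_Cons)
    have e1: "ens_infos off (T # ts) ! c = ens_infos (off + tsize T) ts ! k" using k by (simp add: nth_append)
    have e2: "\<And>j. ens_infos off (T # ts) ! (tsize T + j) = ens_infos (off + tsize T) ts ! j" by (simp add: nth_append)
    from Cons.IH[OF kk, of "off + tsize T"] show ?thesis
    proof
      assume "info_parent (ens_infos (off + tsize T) ts ! k) = None \<and> info_path (ens_infos (off + tsize T) ts ! k) = []"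
      then show ?thesis unfolding e1 by blast
    next
      assume "\<exists>j<k. info_parent (ens_infos (off + tsize T) ts ! k) = Some (off + tsize T + j) \<and>
     (\<exists>q t a b. fst (ens_infos (off + tsize T) ts ! j) = Node q t a b \<and>
        (if info_dir (ens_infos (off + tsize T) ts ! k) then k = j + 1 else k = j + 1 + tsize a) \<and>
        info_path (ens_infos (off + tsize T) ts ! k) = info_path (ens_infos (off + tsize T) ts ! j) @ [(q, t, info_dir (ens_infos (off + tsize T) ts ! k))])"
      then obtain j q t a b where j: "j < k" "info_parent (ens_infos (off + tsize T) ts ! k) = Some (off + tsize T + j)"
        "fst (ens_infos (off + tsize T) ts ! j) = Node q t a b"
        "(if info_dir (ens_infos (off + tsize T) ts ! k) then k = j + 1 else k = j + 1 + tsize a)"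
        "info_path (ens_infos (off + tsize T) ts ! k) = info_path (ens_infos (off + tsize T) ts ! j) @ [(q, t, info_dir (ens_infos (off + tsize T) ts ! k))]"
        by blast
      have f3: "(if info_dir (ens_infos (off + tsize T) ts ! k) then c = (tsize T + j) + 1 else c = (tsize T + j) + 1 + tsize a)"
        using j(4) k by (simp split: if_splits)
      show ?thesis apply (rule disjI2) apply (rule exI[of _ "tsize T + j"]) unfolding e1 e2 using j k f3
        by (simp add: add.assoc)
    qed
  qed
qed

lemma sat_path_Nil[simp]: "sat_path [] v" by (simp add: sat_path_def)

lemma ens_infos_eval:
  "sum_list (map (\<lambda>e. leaf_val (fst e) * (if sat_path (info_path e) v then 1 else 0)) (ens_infos off ts)) = ens_eval ts v"
  by (induction ts arbitrary: off) (simp_all add: ens_eval_def tree_infos_eval[where pa = "[]", simplified])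

lemma ens_infos_feats:
  "wf_ensemble d ts \<Longrightarrow> e \<in> set (ens_infos off ts) \<Longrightarrow> set (map fst (info_path e)) \<subseteq> {1..d} \<and>
     (\<forall>q t a b. fst e = Node q t a b \<longrightarrow> q \<in> {1..d})"
proof (induction ts arbitrary: off)
  case Nil
  then show ?case by simp
next
  case (Cons T ts)
  have wf_T: "feats T \<subseteq> {1..d}" "wf_ensemble d ts" using Cons.prems(1) by (auto simp: wf_ensemble_def)
  from Cons.prems(2) show ?case
  proof (cases "e \<in> set (tree_infos off None False [] T)")
    case True
    then show ?thesis using tree_infos_feats[OF True] wf_T by auto
  next
    case False
    then show ?thesis using Cons.IH[OF wf_T(2)] Cons.prems(2) by auto
  qed
qed

section \<open>Reach probabilities\<close>

text \<open>Indicators are written with \<^const>\<open>of_bool\<close>; the invariants of the program carry many of them,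
  so the simplifier must not split on them or turn weighted sums into sums over subsets.\<close>

declare sum_mult_of_bool_eq [simp del] sum_of_bool_mult_eq [simp del] split_of_bool [split del]

definition sat_feat :: "nat \<Rightarrow> constr list \<Rightarrow> real \<Rightarrow> bool" where
  "sat_feat q cs v \<longleftrightarrow> list_all (\<lambda>(q', t, b). q' = q \<longrightarrow> (v < t) = b) cs"

lemma of_bool_Ball:
  "finite Q \<Longrightarrow> (of_bool (\<forall>q\<in>Q. P q) :: 'a :: comm_semiring_1) = (\<Prod>q\<in>Q. of_bool (P q))"
  by (induction Q rule: finite_induct) (simp_all add: of_bool_conj)

lemma sat_path_iff_sat_feat: "set (map fst cs) \<subseteq> Q \<Longrightarrow> sat_path cs v \<longleftrightarrow> (\<forall>q\<in>Q. sat_feat q cs (v q))"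
  unfolding sat_path_def sat_feat_def list_all_iff by fastforce

lemma pred_sat_feat: "Measurable.pred borel (\<lambda>v. sat_feat q cs (a + v))"
proof (induction cs)
  case Nil
  then show ?case by (simp add: sat_feat_def)
next
  case (Cons c cs)
  obtain q' t b where c: "c = (q', t, b)" by (cases c) auto
  have e: "(\<lambda>v. sat_feat q (c # cs) (a + v)) = (\<lambda>v. (q' = q \<longrightarrow> (a + v < t) = b) \<and> sat_feat q cs (a + v))"
    by (simp add: sat_feat_def c)
  show ?case unfolding e using Cons by measurable
qed

lemma sets_sat_feat: "{v. sat_feat q cs (a + v)} \<in> sets borel"
  using predE[OF pred_sat_feat] by simp

text \<open>An interval with optional ends, as the program stores it: a zero flag \<open>hl\<close> (\<open>hh\<close>)
  means that there is no lower (upper) bound.\<close>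

definition in_interval :: "nat \<Rightarrow> real \<Rightarrow> nat \<Rightarrow> real \<Rightarrow> real \<Rightarrow> bool" where
  "in_interval hl lo hh hi v \<longleftrightarrow> (0 < hl \<longrightarrow> lo \<le> v) \<and> (0 < hh \<longrightarrow> v < hi)"

locale pg_setting =
  fixes d :: nat and ts :: "dtree list" and x :: "nat \<Rightarrow> real" and S :: "nat set" and D :: "nat \<Rightarrow> real measure"
  assumes wf_ts: "wf_ensemble d ts" and S_subset: "S \<subseteq> {1..d}"
    and prob_space_D: "\<And>i. i \<in> S \<Longrightarrow> prob_space (D i)" and sets_D: "\<And>i. i \<in> S \<Longrightarrow> sets (D i) = sets borel"
begin

definition feat_prob :: "nat \<Rightarrow> constr list \<Rightarrow> real" where
  "feat_prob q cs = (if q \<in> S then measure (D q) {v. sat_feat q cs (x q + v)} else of_bool (sat_feat q cs (x q)))"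

definition path_prob :: "constr list \<Rightarrow> real" where
  "path_prob cs = (\<integral>\<delta>. of_bool (sat_path cs (perturb_pt x S \<delta>)) \<partial>PiM S D)"

text \<open>The product measure theorems need a probability space on every coordinate.\<close>

definition D_ext :: "nat \<Rightarrow> real measure" where "D_ext i = (if i \<in> S then D i else return borel 0)"

lemma finite_S: "finite S" using S_subset finite_subset by blast

lemma prob_space_D_ext: "prob_space (D_ext i)" by (auto simp: D_ext_def prob_space_D prob_space_return)

lemma PiM_D_ext: "PiM S D = PiM S D_ext" by (rule PiM_cong) (auto simp: D_ext_def)

lemma space_D: "i \<in> S \<Longrightarrow> space (D i) = UNIV"
  using sets_eq_imp_space_eq[OF sets_D] by simp

lemma prob_space_PiM_S: "prob_space (PiM S D)"
  by (rule prob_space_PiM) (rule prob_space_D)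

lemma path_prob_prod:
  assumes "set (map fst cs) \<subseteq> {1..d}"
  shows "path_prob cs = (\<Prod>q\<in>{1..d}. feat_prob q cs)"
proof -
  let ?h = "\<lambda>q v. of_bool (sat_feat q cs (x q + v)) :: real"
  let ?C = "\<Prod>q\<in>{1..d} - S. of_bool (sat_feat q cs (x q)) :: real"
  have pt: "of_bool (sat_path cs (perturb_pt x S \<delta>)) = (\<Prod>q\<in>S. ?h q (\<delta> q)) * ?C" for \<delta>
  proof -
    have "of_bool (sat_path cs (perturb_pt x S \<delta>)) = (\<Prod>q\<in>{1..d}. of_bool (sat_feat q cs (perturb_pt x S \<delta> q)) :: real)"
      unfolding sat_path_iff_sat_feat[OF assms] by (rule of_bool_Ball) simp
    also have "\<dots> = (\<Prod>q\<in>{1..d} - S. of_bool (sat_feat q cs (perturb_pt x S \<delta> q))) * (\<Prod>q\<in>S. of_bool (sat_feat q cs (perturb_pt x S \<delta> q)))"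
      using prod.subset_diff[OF S_subset] by simp
    also have "(\<Prod>q\<in>{1..d} - S. of_bool (sat_feat q cs (perturb_pt x S \<delta> q))) = ?C"
      by (rule prod.cong) (auto simp: perturb_pt_def)
    also have "(\<Prod>q\<in>S. of_bool (sat_feat q cs (perturb_pt x S \<delta> q))) = (\<Prod>q\<in>S. ?h q (\<delta> q))"
      by (rule prod.cong) (auto simp: perturb_pt_def)
    finally show ?thesis by simp
  qed
  interpret product_sigma_finite D_ext
    unfolding product_sigma_finite_def using prob_space_imp_sigma_finite[OF prob_space_D_ext] by blast
  have hi: "integrable (D_ext q) (?h q)" if "q \<in> S" for q
  proof -
    interpret prob_space "D_ext q" by (rule prob_space_D_ext)
    have "?h q = indicator {v. sat_feat q cs (x q + v)}" by (auto simp: of_bool_def indicator_def)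
    moreover have "{v. sat_feat q cs (x q + v)} \<in> sets (D_ext q)" using that sets_sat_feat sets_D by (simp add: D_ext_def)
    ultimately show ?thesis by (simp add: integrable_indicator_iff emeasure_eq_measure)
  qed
  have hv: "integral\<^sup>L (D_ext q) (?h q) = measure (D q) {v. sat_feat q cs (x q + v)}" if "q \<in> S" for q
  proof -
    have "?h q = indicator {v. sat_feat q cs (x q + v)}" by (auto simp: of_bool_def indicator_def)
    then show ?thesis using that space_D by (simp add: D_ext_def)
  qed
  have "path_prob cs = (\<integral>\<delta>. (\<Prod>q\<in>S. ?h q (\<delta> q)) * ?C \<partial>PiM S D_ext)"
    unfolding path_prob_def PiM_D_ext pt ..
  also have "\<dots> = (\<integral>\<delta>. (\<Prod>q\<in>S. ?h q (\<delta> q)) \<partial>PiM S D_ext) * ?C" by simp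
  also have "(\<integral>\<delta>. (\<Prod>q\<in>S. ?h q (\<delta> q)) \<partial>PiM S D_ext) = (\<Prod>q\<in>S. integral\<^sup>L (D_ext q) (?h q))"
    by (rule product_integral_prod[OF finite_S hi])
  also have "\<dots> = (\<Prod>q\<in>S. feat_prob q cs)"
    by (rule prod.cong) (auto simp: hv feat_prob_def)
  also have "?C = (\<Prod>q\<in>{1..d} - S. feat_prob q cs)"
    by (rule prod.cong) (auto simp: feat_prob_def)
  finally show ?thesis using prod.subset_diff[OF S_subset, of "\<lambda>q. feat_prob q cs"] by (simp add: mult.commute)
qed

lemma sat_feat_snoc: "sat_feat q' (cs @ [(q, t, b)]) v = (sat_feat q' cs v \<and> (q = q' \<longrightarrow> (v < t) = b))"
  by (auto simp: sat_feat_def)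

lemma feat_prob_nonneg: "0 \<le> feat_prob q cs"
  by (auto simp: feat_prob_def of_bool_def)

lemma feat_prob_snoc_other: "q' \<noteq> q \<Longrightarrow> feat_prob q' (cs @ [(q, t, b)]) = feat_prob q' cs"
  by (simp add: feat_prob_def sat_feat_snoc)

lemma feat_prob_snoc_le: "feat_prob q (cs @ [(q, t, b)]) \<le> feat_prob q cs"
proof (cases "q \<in> S")
  case True
  interpret prob_space "D q" by (rule prob_space_D[OF True])
  have "measure (D q) {v. sat_feat q (cs @ [(q, t, b)]) (x q + v)} \<le> measure (D q) {v. sat_feat q cs (x q + v)}"
    by (rule finite_measure_mono) (auto simp: sat_feat_snoc sets_sat_feat sets_D[OF True])
  then show ?thesis using True by (simp add: feat_prob_def)
next
  case False
  then show ?thesis by (auto simp: feat_prob_def of_bool_def sat_feat_snoc)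
qed

text \<open>One more test on feature \<open>q\<close> changes only the \<open>q\<close>-factor of \<open>path_prob\<close>; if that factor
  vanishes, so does the new one.\<close>

lemma path_prob_snoc:
  assumes "set (map fst cs) \<subseteq> {1..d}" "q \<in> {1..d}"
  shows "path_prob (cs @ [(q, t, b)]) = (if feat_prob q cs = 0 then 0 else path_prob cs * feat_prob q (cs @ [(q, t, b)]) / feat_prob q cs)"
proof -
  let ?cs' = "cs @ [(q, t, b)]"
  let ?R = "\<Prod>q'\<in>{1..d} - {q}. feat_prob q' cs"
  have "path_prob cs = feat_prob q cs * ?R" using path_prob_prod[OF assms(1)] prod.remove[of "{1..d}" q] assms(2) by simp
  moreover have "path_prob ?cs' = feat_prob q ?cs' * ?R"
  proof -
    have "path_prob ?cs' = (\<Prod>q'\<in>{1..d}. feat_prob q' ?cs')" using assms by (intro path_prob_prod) auto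
    also have "\<dots> = feat_prob q ?cs' * (\<Prod>q'\<in>{1..d} - {q}. feat_prob q' ?cs')" using prod.remove[of "{1..d}" q] assms(2) by simp
    also have "(\<Prod>q'\<in>{1..d} - {q}. feat_prob q' ?cs') = ?R" by (rule prod.cong) (auto simp: feat_prob_snoc_other)
    finally show ?thesis .
  qed
  moreover have "feat_prob q cs = 0 \<Longrightarrow> feat_prob q ?cs' = 0" using feat_prob_snoc_le[of q cs t b] feat_prob_nonneg[of q ?cs'] by simp
  ultimately show ?thesis by (simp add: field_simps)
qed

lemma path_prob_Nil: "path_prob [] = 1"
proof -
  interpret prob_space "PiM S D" by (rule prob_space_PiM_S)
  show ?thesis by (simp add: path_prob_def of_bool_def prob_space)
qed

definition interval_prob :: "nat \<Rightarrow> nat \<Rightarrow> real \<Rightarrow> nat \<Rightarrow> real \<Rightarrow> real" where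
  "interval_prob q hl lo hh hi = (if q \<in> S then
      (if 0 < hl \<and> 0 < hh \<and> \<not> lo < hi then 0
       else (if 0 < hh then cdf_oracle D q (hi - x q) else 1) - (if 0 < hl then cdf_oracle D q (lo - x q) else 0))
    else (if (0 < hl \<and> x q < lo) \<or> (0 < hh \<and> \<not> x q < hi) then 0 else 1))"

lemma interval_prob_eq_feat_prob:
  assumes "\<And>v. in_interval hl lo hh hi v = sat_feat q cs v"
  shows "interval_prob q hl lo hh hi = feat_prob q cs"
proof (cases "q \<in> S")
  case False
  then show ?thesis using assms[of "x q"] by (auto simp: interval_prob_def feat_prob_def of_bool_def in_interval_def)
next
  case True
  interpret prob_space "D q" by (rule prob_space_D[OF True])
  have sp: "space (D q) = UNIV" using space_D[OF True] .
  have sb: "\<And>a::real. {..<a} \<in> sets (D q)" using sets_D[OF True] by simp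
  have set: "{v. sat_feat q cs (x q + v)} = {v. in_interval hl lo hh hi (x q + v)}" using assms by simp
  let ?A = "{v. in_interval hl lo hh hi (x q + v)}"
  have m: "measure (D q) ?A = interval_prob q hl lo hh hi"
  proof (cases "0 < hl")
    case hl: True
    show ?thesis
    proof (cases "0 < hh")
      case hh: True
      show ?thesis
      proof (cases "lo < hi")
        case False
        then have "?A = {}" using hl hh by (auto simp: in_interval_def)
        then show ?thesis using True hl hh False by (simp add: interval_prob_def)
      next
        case lohi: True
        have "?A = {..<hi - x q} - {..<lo - x q}" using hl hh by (auto simp: in_interval_def)
        moreover have "measure (D q) ({..<hi - x q} - {..<lo - x q}) = measure (D q) {..<hi - x q} - measure (D q) {..<lo - x q}"
          using lohi by (intro finite_measure_Diff sb) auto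
        ultimately show ?thesis using True hl hh lohi by (simp add: interval_prob_def cdf_oracle_def)
      qed
    next
      case hh: False
      have "?A = space (D q) - {..<lo - x q}" using hl hh sp by (auto simp: in_interval_def)
      moreover have "measure (D q) (space (D q) - {..<lo - x q}) = 1 - measure (D q) {..<lo - x q}"
        using prob_compl[OF sb] by simp
      ultimately show ?thesis using True hl hh by (simp add: interval_prob_def cdf_oracle_def)
    qed
  next
    case hl: False
    show ?thesis
    proof (cases "0 < hh")
      case hh: True
      have "?A = {..<hi - x q}" using hl hh by (auto simp: in_interval_def)
      then show ?thesis using True hl hh by (simp add: interval_prob_def cdf_oracle_def)
    next
      case hh: False
      have "?A = space (D q)" using hl hh sp by (auto simp: in_interval_def)
      then show ?thesis using True hl hh prob_space by (simp add: interval_prob_def)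
    qed
  qed
  then show ?thesis using True set by (simp add: feat_prob_def)
qed

abbreviation infos :: "node_info list" where
  "infos \<equiv> ens_infos 0 ts"
abbreviation nn :: nat where
  "nn \<equiv> ens_size ts"
definition root_path :: "nat \<Rightarrow> constr list" where "root_path c = info_path (infos ! c)"
definition weight :: "nat \<Rightarrow> real" where "weight c = leaf_val (fst (infos ! c))"

definition path_ind :: "constr list \<Rightarrow> (nat \<Rightarrow> real) \<Rightarrow> real" where
  "path_ind cs \<delta> = of_bool (sat_path cs (perturb_pt x S \<delta>))"

lemma measurable_component_S: "q \<in> S \<Longrightarrow> (\<lambda>\<delta>. \<delta> q) \<in> borel_measurable (PiM S D)"
  using measurable_component_singleton[of q S D] measurable_cong_sets[OF refl sets_D[of q], of "PiM S D"] by simp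

lemma pred_sat_path_perturb: "Measurable.pred (PiM S D) (\<lambda>\<delta>. sat_path cs (perturb_pt x S \<delta>))"
proof (induction cs)
  case Nil
  then show ?case by simp
next
  case (Cons c cs)
  obtain q t b where c: "c = (q, t, b)" by (cases c) auto
  have e: "(\<lambda>\<delta>. sat_path (c # cs) (perturb_pt x S \<delta>)) = (\<lambda>\<delta>. ((perturb_pt x S \<delta> q < t) = b) \<and> sat_path cs (perturb_pt x S \<delta>))"
    by (simp add: sat_path_def c)
  show ?case
  proof (cases "q \<in> S")
    case True
    have m[measurable]: "(\<lambda>\<delta>. \<delta> q) \<in> borel_measurable (PiM S D)" by (rule measurable_component_S[OF True])
    note Cons[measurable]
    have e2: "perturb_pt x S \<delta> q = x q + \<delta> q" for \<delta> using True by (simp add: perturb_pt_def)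
    show ?thesis unfolding e e2 by measurable
  next
    case False
    note Cons[measurable]
    have e2: "perturb_pt x S \<delta> q = x q" for \<delta> using False by (simp add: perturb_pt_def)
    show ?thesis unfolding e e2 by measurable
  qed
qed

lemma integrable_path_ind: "integrable (PiM S D) (path_ind cs)"
proof -
  interpret prob_space "PiM S D" by (rule prob_space_PiM_S)
  have m: "path_ind cs \<in> borel_measurable (PiM S D)"
    unfolding path_ind_def of_bool_def by (rule measurable_If[OF _ _ predE[OF pred_sat_path_perturb]]) auto
  show ?thesis by (rule integrable_const_bound[where B = 1]) (auto simp: path_ind_def of_bool_def m)
qed

lemma ens_eval_eq_sum: "ens_eval ts v = (\<Sum>c<nn. weight c * of_bool (sat_path (root_path c) v))"
proof -
  have "ens_eval ts v = sum_list (map (\<lambda>e. leaf_val (fst e) * (if sat_path (info_path e) v then 1 else 0)) infos)"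
    using ens_infos_eval[of v 0 ts] by simp
  also have "\<dots> = (\<Sum>c<nn. weight c * of_bool (sat_path (root_path c) v))"
    by (simp add: sum_list_sum_nth atLeast0LessThan weight_def root_path_def of_bool_def)
  finally show ?thesis .
qed

definition f_x :: real where "f_x = (\<Sum>c<nn. weight c * of_bool (sat_path (root_path c) x))"
definition moment1 :: real where "moment1 = (\<Sum>m<nn. weight m * path_prob (root_path m))"
definition moment2 :: real where "moment2 = (\<Sum>l<nn. weight l * (\<Sum>m<nn. weight m * path_prob (root_path l @ root_path m)))"

lemma integral_path_ind: "integral\<^sup>L (PiM S D) (path_ind cs) = path_prob cs" unfolding path_prob_def path_ind_def[abs_def] ..

lemma sat_path_append: "sat_path (a @ b) v = (sat_path a v \<and> sat_path b v)" by (simp add: sat_path_def ball_Un)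

lemma PG2_eq_moments: "PG2 ts x S D = moment2 - 2 * f_x * moment1 + f_x\<^sup>2"
proof -
  interpret prob_space "PiM S D" by (rule prob_space_PiM_S)
  have fx: "ens_eval ts x = f_x" by (simp add: ens_eval_eq_sum f_x_def)
  let ?E = "\<lambda>\<delta>. (\<Sum>c<nn. weight c * path_ind (root_path c) \<delta>)"
  let ?QQ = "\<lambda>\<delta>. (\<Sum>l<nn. weight l * (\<Sum>m<nn. weight m * path_ind (root_path l @ root_path m) \<delta>))"
  have pt: "(ens_eval ts (perturb_pt x S \<delta>) - ens_eval ts x)\<^sup>2 = ?QQ \<delta> + (- 2 * f_x) * ?E \<delta> + f_x\<^sup>2" for \<delta>
  proof -
    have e: "ens_eval ts (perturb_pt x S \<delta>) = ?E \<delta>" by (simp add: ens_eval_eq_sum path_ind_def)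
    have "?E \<delta> * ?E \<delta> = ?QQ \<delta>"
      by (simp add: sum_distrib_left sum_distrib_right path_ind_def of_bool_conj sat_path_append ac_simps)
    then show ?thesis unfolding e fx by (simp add: power2_eq_square algebra_simps)
  qed
  have iE: "integrable (PiM S D) ?E" by (auto intro!: integrable_sum integrable_mult_right integrable_path_ind)
  have iQ: "integrable (PiM S D) ?QQ" by (auto intro!: integrable_sum integrable_mult_right integrable_path_ind)
  have "PG2 ts x S D = (\<integral>\<delta>. ?QQ \<delta> + (- 2 * f_x) * ?E \<delta> + f_x\<^sup>2 \<partial>PiM S D)"
    unfolding PG2_def pt ..
  also have "\<dots> = (\<integral>\<delta>. ?QQ \<delta> \<partial>PiM S D) + (- 2 * f_x) * (\<integral>\<delta>. ?E \<delta> \<partial>PiM S D) + f_x\<^sup>2"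
    using iE iQ prob_space by (simp)
  also have "(\<integral>\<delta>. ?E \<delta> \<partial>PiM S D) = moment1"
    by (simp add: integrable_path_ind integral_path_ind moment1_def)
  also have "(\<integral>\<delta>. ?QQ \<delta> \<partial>PiM S D) = moment2"
    by (simp add: integrable_path_ind integral_path_ind moment2_def)
  finally show ?thesis by simp
qed

end

section \<open>The program\<close>

text \<open>Besides the input banks of \<^const>\<open>init_state\<close>, the program uses natural banks
  7 and 8 for the parent table (parent index plus one, 0 at roots) and the left-child flags;
  9 and 10 with real banks 2 and 3 for the own box of each node, that is, the interval to which the
  tests on its root path restrict its own feature;
  11, 12, 13 with real banks 4 and 5 for the feature table of the current leaf: a stamp and the
  interval its root path imposes on each feature, valid only if the stamp is current, so that the
  table never has to be cleared;
  14 and 15 with real banks 6 and 7 for the interval that the current leaf's path followed by the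
  root path of a node imposes on the node's feature;
  and real banks 8, 9, 10, 11 for the probability of that interval, the probability of reaching
  both the leaf and the node, whether \<open>x\<close> itself reaches the node, and the reach probability of each leaf.
  An interval is stored as two flags (0 meaning unbounded) and two bounds.
  Registers \<open>rZ\<close> and \<open>xRZ\<close> hold 0 and \<open>rONE\<close> holds 1 throughout.\<close>

abbreviation (input) rZ :: nat where "rZ \<equiv> 0"
abbreviation (input) rN :: nat where "rN \<equiv> 1"
abbreviation (input) rC :: nat where "rC \<equiv> 2"
abbreviation (input) rK :: nat where "rK \<equiv> 3"
abbreviation (input) rCUR :: nat where "rCUR \<equiv> 4"
abbreviation (input) rPR :: nat where "rPR \<equiv> 5"
abbreviation (input) rW :: nat where "rW \<equiv> 6"
abbreviation (input) rQ :: nat where "rQ \<equiv> 7"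
abbreviation (input) rT1 :: nat where "rT1 \<equiv> 8"
abbreviation (input) rT2 :: nat where "rT2 \<equiv> 9"
abbreviation (input) rONE :: nat where "rONE \<equiv> 10"
abbreviation (input) rSTK :: nat where "rSTK \<equiv> 11"
abbreviation (input) rV :: nat where "rV \<equiv> 12"
abbreviation (input) rHL :: nat where "rHL \<equiv> 13"
abbreviation (input) rHH :: nat where "rHH \<equiv> 14"
abbreviation (input) rKM :: nat where "rKM \<equiv> 15"
abbreviation (input) rNP1 :: nat where "rNP1 \<equiv> 16"
abbreviation (input) rDR :: nat where "rDR \<equiv> 17"

abbreviation (input) xOUT :: nat where "xOUT \<equiv> 0"
abbreviation (input) xACC :: nat where "xACC \<equiv> 1"
abbreviation (input) xQS :: nat where "xQS \<equiv> 2"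
abbreviation (input) xA :: nat where "xA \<equiv> 3"
abbreviation (input) xFX :: nat where "xFX \<equiv> 4"
abbreviation (input) xPB :: nat where "xPB \<equiv> 5"
abbreviation (input) xLO :: nat where "xLO \<equiv> 6"
abbreviation (input) xHI :: nat where "xHI \<equiv> 7"
abbreviation (input) xTT :: nat where "xTT \<equiv> 8"
abbreviation (input) xRT1 :: nat where "xRT1 \<equiv> 9"
abbreviation (input) xRT2 :: nat where "xRT2 \<equiv> 10"
abbreviation (input) xRZ :: nat where "xRZ \<equiv> 11"
abbreviation (input) xPX :: nat where "xPX \<equiv> 12"
abbreviation (input) xPF1 :: nat where "xPF1 \<equiv> 13"
abbreviation (input) xPF2 :: nat where "xPF2 \<equiv> 14"
abbreviation (input) xPRES :: nat where "xPRES \<equiv> 15"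
abbreviation (input) xPV0 :: nat where "xPV0 \<equiv> 17"
abbreviation (input) xPP :: nat where "xPP \<equiv> 18"
abbreviation (input) xP :: nat where "xP \<equiv> 19"
abbreviation (input) xIV :: nat where "xIV \<equiv> 20"

definition IfEq :: "nat \<Rightarrow> nat \<Rightarrow> com \<Rightarrow> com \<Rightarrow> com" where
  "IfEq a b c1 c2 = IfN a b c2 (IfN b a c2 c1)"

definition NARROW :: com where
  "NARROW = IfN rZ rDR
    (IfN rZ rHH (IfR xTT xHI (Ins (RAdd xHI xTT xRZ)) SKIP) (Ins (RAdd xHI xTT xRZ) ;; Ins (NConst rHH 1)))
    (IfN rZ rHL (IfR xLO xTT (Ins (RAdd xLO xTT xRZ)) SKIP) (Ins (RAdd xLO xTT xRZ) ;; Ins (NConst rHL 1)))"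

definition FEAT_PROB :: com where
  "FEAT_PROB = Ins (NLoad rT2 6 rQ) ;; Ins (RLoad xPX 1 rQ) ;;
   IfN rZ rT2
     (IfN rZ rHH (Ins (RSub xRT1 xHI xPX) ;; Ins (Cdf xPF1 rQ xRT1)) (Ins (RConst xPF1 1)) ;;
      IfN rZ rHL (Ins (RSub xRT1 xLO xPX) ;; Ins (Cdf xPF2 rQ xRT1)) (Ins (RConst xPF2 0)) ;;
      Ins (RSub xPRES xPF1 xPF2) ;;
      IfN rZ rHL (IfN rZ rHH (IfR xLO xHI SKIP (Ins (RConst xPRES 0))) SKIP) SKIP)
     (Ins (RConst xPRES 1) ;; IfN rZ rHL (IfR xPX xLO (Ins (RConst xPRES 0)) SKIP) SKIP ;;
      IfN rZ rHH (IfR xPX xHI SKIP (Ins (RConst xPRES 0))) SKIP)"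

definition PARENT_STEP :: com where
  "PARENT_STEP = Ins (NLoad rT1 1 rC) ;;
     IfN rZ rT1 (Ins (NLoad rT2 3 rC) ;; Ins (NAdd rV rC rONE) ;; Ins (NStore 7 rT2 rV) ;; Ins (NStore 8 rT2 rONE) ;;
                 Ins (NLoad rT2 4 rC) ;; Ins (NStore 7 rT2 rV) ;; Ins (NStore 8 rT2 rZ)) SKIP ;;
     Ins (NAdd rC rC rONE)"

definition BOX_WALK_STEP :: com where
  "BOX_WALK_STEP = Ins (NSub rW rPR rONE) ;; Ins (NLoad rT1 2 rW) ;;
     IfEq rT1 rQ (Ins (RLoad xTT 0 rW) ;; Ins (NLoad rDR 8 rCUR) ;; NARROW) SKIP ;;
     Ins (NAdd rCUR rW rZ) ;; Ins (NLoad rPR 7 rCUR)"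

definition BOX_INIT :: com where
  "BOX_INIT = Ins (NLoad rQ 2 rC) ;; Ins (NAdd rCUR rC rZ) ;; Ins (NLoad rPR 7 rCUR) ;; Ins (NConst rHL 0) ;; Ins (NConst rHH 0)"

definition BOX_STORE :: com where
  "BOX_STORE = Ins (NStore 9 rC rHL) ;; Ins (NStore 10 rC rHH) ;; Ins (RStore 2 rC xLO) ;; Ins (RStore 3 rC xHI) ;; Ins (NAdd rC rC rONE)"

definition BOX_STEP :: com where
  "BOX_STEP = BOX_INIT ;; (WhileN rZ rPR BOX_WALK_STEP ;; BOX_STORE)"

definition TABLE_WALK_STEP :: com where
  "TABLE_WALK_STEP = Ins (NSub rW rPR rONE) ;; Ins (NLoad rQ 2 rW) ;; Ins (NLoad rT1 11 rQ) ;;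
     IfEq rT1 rSTK SKIP (Ins (NStore 11 rQ rSTK) ;; Ins (NStore 12 rQ rZ) ;; Ins (NStore 13 rQ rZ)) ;;
     Ins (NLoad rHL 12 rQ) ;; Ins (NLoad rHH 13 rQ) ;; Ins (RLoad xLO 4 rQ) ;; Ins (RLoad xHI 5 rQ) ;;
     Ins (RLoad xTT 0 rW) ;; Ins (NLoad rDR 8 rCUR) ;; NARROW ;;
     Ins (NStore 12 rQ rHL) ;; Ins (NStore 13 rQ rHH) ;; Ins (RStore 4 rQ xLO) ;; Ins (RStore 5 rQ xHI) ;;
     Ins (NAdd rCUR rW rZ) ;; Ins (NLoad rPR 7 rCUR)"

definition BOX_MERGE :: com where
  "BOX_MERGE = Ins (NLoad rT2 12 rQ) ;;
     IfN rZ rT2 (Ins (RLoad xRT1 4 rQ) ;; IfN rZ rHL (IfR xLO xRT1 (Ins (RAdd xLO xRT1 xRZ)) SKIP) (Ins (RAdd xLO xRT1 xRZ) ;; Ins (NConst rHL 1))) SKIP ;;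
     Ins (NLoad rT2 13 rQ) ;;
     IfN rZ rT2 (Ins (RLoad xRT1 5 rQ) ;; IfN rZ rHH (IfR xRT1 xHI (Ins (RAdd xHI xRT1 xRZ)) SKIP) (Ins (RAdd xHI xRT1 xRZ) ;; Ins (NConst rHH 1))) SKIP"

definition CHILD_PROB :: com where
  "CHILD_PROB = Ins (NSub rV rPR rONE) ;; Ins (NLoad rQ 2 rV) ;; Ins (NLoad rHL 14 rV) ;; Ins (NLoad rHH 15 rV) ;;
     Ins (RLoad xLO 6 rV) ;; Ins (RLoad xHI 7 rV) ;; Ins (RLoad xTT 0 rV) ;; Ins (NLoad rDR 8 rC) ;; NARROW ;; FEAT_PROB ;;
     Ins (RLoad xPV0 8 rV) ;; Ins (RLoad xPP 9 rV) ;;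
     IfR xRZ xPV0 (Ins (RMul xRT1 xPP xPRES) ;; Ins (RDiv xP xRT1 xPV0))
       (IfR xPV0 xRZ (Ins (RMul xRT1 xPP xPRES) ;; Ins (RDiv xP xRT1 xPV0)) (Ins (RConst xP 0))) ;;
     Ins (RLoad xIV 10 rV) ;; Ins (RLoad xPX 1 rQ) ;;
     IfR xPX xTT (IfN rZ rDR SKIP (Ins (RConst xIV 0))) (IfN rZ rDR (Ins (RConst xIV 0)) SKIP)"

definition ROOT_PROB :: com where
  "ROOT_PROB = Ins (RAdd xP xPB xRZ) ;; Ins (RConst xIV 1)"

definition ACCUMULATE :: com where
  "ACCUMULATE = Ins (RLoad xTT 0 rC) ;; Ins (RMul xRT1 xTT xP) ;; Ins (RAdd xACC xACC xRT1) ;;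
     IfEq rK rZ (Ins (RStore 11 rC xP) ;; Ins (RMul xRT1 xTT xIV) ;; Ins (RAdd xFX xFX xRT1)) SKIP"

definition PASS_BOX :: com where
  "PASS_BOX = Ins (NLoad rQ 2 rC) ;; Ins (NLoad rHL 9 rC) ;; Ins (NLoad rHH 10 rC) ;; Ins (RLoad xLO 2 rC) ;; Ins (RLoad xHI 3 rC) ;;
     Ins (NLoad rT1 11 rQ) ;; IfEq rT1 rSTK BOX_MERGE SKIP"

definition PASS_FEAT_PROB :: com where
  "PASS_FEAT_PROB = Ins (NStore 14 rC rHL) ;; Ins (NStore 15 rC rHH) ;; Ins (RStore 6 rC xLO) ;; Ins (RStore 7 rC xHI) ;;
     FEAT_PROB ;; Ins (RStore 8 rC xPRES) ;; Ins (NLoad rPR 7 rC)"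

definition PASS_PATH_PROB :: com where
  "PASS_PATH_PROB = IfN rZ rPR CHILD_PROB ROOT_PROB"

definition PASS_ACCUMULATE :: com where
  "PASS_ACCUMULATE = Ins (RStore 9 rC xP) ;; Ins (RStore 10 rC xIV) ;;
     Ins (NLoad rT1 1 rC) ;; IfN rZ rT1 SKIP ACCUMULATE ;; Ins (NAdd rC rC rONE)"

definition PASS_UPDATE :: com where "PASS_UPDATE = PASS_FEAT_PROB ;; (PASS_PATH_PROB ;; PASS_ACCUMULATE)"

definition PASS_STEP :: com where "PASS_STEP = PASS_BOX ;; PASS_UPDATE"

definition PASS_INIT :: com where "PASS_INIT = Ins (RConst xACC 0) ;; Ins (NConst rC 0)"

definition PASS :: com where
  "PASS = PASS_INIT ;; WhileN rC rN PASS_STEP"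

definition FIRST_PASS :: com where
  "FIRST_PASS = Ins (RConst xPB 1) ;; (PASS ;; Ins (RAdd xA xACC xRZ))"

definition LEAF_INIT :: com where
  "LEAF_INIT = Ins (RLoad xPB 11 rKM) ;; Ins (NAdd rCUR rKM rZ) ;; Ins (NLoad rPR 7 rCUR)"

definition LEAF_STORE :: com where
  "LEAF_STORE = Ins (RLoad xTT 0 rKM) ;; Ins (RMul xRT1 xTT xACC) ;; Ins (RAdd xQS xQS xRT1)"

definition LEAF_PASS :: com where
  "LEAF_PASS = LEAF_INIT ;; (WhileN rZ rPR TABLE_WALK_STEP ;; (PASS ;; LEAF_STORE))"

definition OUTER_INIT :: com where
  "OUTER_INIT = Ins (NSub rKM rK rONE) ;; Ins (NLoad rT1 1 rKM)"

definition OUTER_NODE :: com where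
  "OUTER_NODE = OUTER_INIT ;; IfN rZ rT1 SKIP LEAF_PASS"

definition OUTER_STEP :: com where
  "OUTER_STEP = Ins (NAdd rSTK rK rONE) ;; (IfN rZ rK OUTER_NODE FIRST_PASS ;; Ins (NAdd rK rK rONE))"

definition INIT :: com where
  "INIT = Ins (NConst rONE 1) ;; Ins (NLoad rN 0 rONE) ;; Ins (NAdd rNP1 rN rONE)"

definition PARENTS :: com where "PARENTS = Ins (NConst rC 0) ;; WhileN rC rN PARENT_STEP"
definition BOXES :: com where "BOXES = Ins (NConst rC 0) ;; WhileN rC rN BOX_STEP"
definition OUTER :: com where "OUTER = Ins (NConst rK 0) ;; WhileN rK rNP1 OUTER_STEP"

definition FINISH :: com where
  "FINISH = Ins (RMul xRT1 xFX xA) ;; Ins (RAdd xRT1 xRT1 xRT1) ;; Ins (RSub xOUT xQS xRT1) ;;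
     Ins (RMul xRT2 xFX xFX) ;; Ins (RAdd xOUT xOUT xRT2)"

definition PROG :: com where "PROG = INIT ;; PARENTS ;; BOXES ;; OUTER ;; FINISH"

definition narrow_hl :: "nat \<Rightarrow> nat \<Rightarrow> nat" where
  "narrow_hl hl dr = (if 0 < dr then hl else if 0 < hl then hl else 1)"

definition narrow_lo :: "nat \<Rightarrow> real \<Rightarrow> real \<Rightarrow> nat \<Rightarrow> real" where
  "narrow_lo hl lo t dr = (if 0 < dr then lo else if 0 < hl then (if lo < t then t else lo) else t)"

definition narrow_hh :: "nat \<Rightarrow> nat \<Rightarrow> nat" where
  "narrow_hh hh dr = (if 0 < dr then (if 0 < hh then hh else 1) else hh)"

definition narrow_hi :: "nat \<Rightarrow> real \<Rightarrow> real \<Rightarrow> nat \<Rightarrow> real" where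
  "narrow_hi hh hi t dr = (if 0 < dr then (if 0 < hh then (if t < hi then t else hi) else t) else hi)"

lemma in_interval_narrow: "in_interval (narrow_hl hl dr) (narrow_lo hl lo t dr) (narrow_hh hh dr) (narrow_hi hh hi t dr) v = (in_interval hl lo hh hi v \<and> (v < t) = (0 < dr))"
  by (auto simp: in_interval_def narrow_hl_def narrow_lo_def narrow_hh_def narrow_hi_def)

lemma run_NARROW:
  assumes "nreg s 0 = 0" "rreg s 11 = 0"
  shows "run F NARROW s = s\<lparr>nreg := (nreg s)(13 := narrow_hl (nreg s 13) (nreg s 17), 14 := narrow_hh (nreg s 14) (nreg s 17)),
     rreg := (rreg s)(6 := narrow_lo (nreg s 13) (rreg s 6) (rreg s 8) (nreg s 17), 7 := narrow_hi (nreg s 14) (rreg s 7) (rreg s 8) (nreg s 17))\<rparr>"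
  using assms unfolding NARROW_def
  by (cases s) (auto simp: narrow_hl_def narrow_lo_def narrow_hh_def narrow_hi_def fun_eq_iff)

definition interval_prob_mach :: "(nat \<Rightarrow> real \<Rightarrow> real) \<Rightarrow> nat \<Rightarrow> real \<Rightarrow> nat \<Rightarrow> nat \<Rightarrow> real \<Rightarrow> nat \<Rightarrow> real \<Rightarrow> real" where
  "interval_prob_mach F sf xq q hl lo hh hi = (if 0 < sf then
      (if 0 < hl \<and> 0 < hh \<and> \<not> lo < hi then 0
       else (if 0 < hh then F q (hi - xq) else 1) - (if 0 < hl then F q (lo - xq) else 0))
    else (if (0 < hl \<and> xq < lo) \<or> (0 < hh \<and> \<not> xq < hi) then 0 else 1))"

lemma run_FEAT_PROB:
  assumes "nreg s 0 = 0"
  shows "nreg (run F FEAT_PROB s) = (nreg s)(9 := nmem s 6 (nreg s 7))"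
    "nmem (run F FEAT_PROB s) = nmem s" "rmem (run F FEAT_PROB s) = rmem s" "pc (run F FEAT_PROB s) = pc s"
    "rreg (run F FEAT_PROB s) 15 = interval_prob_mach F (nmem s 6 (nreg s 7)) (rmem s 1 (nreg s 7)) (nreg s 7) (nreg s 13) (rreg s 6) (nreg s 14) (rreg s 7)"
    "r \<notin> {9, 12, 13, 14, 15} \<Longrightarrow> rreg (run F FEAT_PROB s) r = rreg s r"
  using assms unfolding FEAT_PROB_def interval_prob_mach_def by (auto simp: fun_eq_iff)

lemma run_BOX_MERGE:
  assumes "nreg s 0 = 0" "rreg s 11 = 0"
  shows "nmem (run F BOX_MERGE s) = nmem s" "rmem (run F BOX_MERGE s) = rmem s" "pc (run F BOX_MERGE s) = pc s"
    "r \<notin> {9, 13, 14} \<Longrightarrow> nreg (run F BOX_MERGE s) r = nreg s r"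
    "r \<notin> {9, 6, 7} \<Longrightarrow> rreg (run F BOX_MERGE s) r = rreg s r"
    "in_interval (nreg (run F BOX_MERGE s) 13) (rreg (run F BOX_MERGE s) 6) (nreg (run F BOX_MERGE s) 14) (rreg (run F BOX_MERGE s) 7) v =
     (in_interval (nreg s 13) (rreg s 6) (nreg s 14) (rreg s 7) v \<and>
      in_interval (nmem s 12 (nreg s 7)) (rmem s 4 (nreg s 7)) (nmem s 13 (nreg s 7)) (rmem s 5 (nreg s 7)) v)"
  using assms unfolding BOX_MERGE_def by (auto simp: in_interval_def)

lemma run_CHILD_PROB:
  fixes F :: "nat \<Rightarrow> real \<Rightarrow> real"
  assumes "nreg s 0 = 0" "rreg s 11 = 0" "nreg s 10 = 1" "0 < nreg s 5"
  defines "v \<equiv> nreg s 5 - 1"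
  defines "q \<equiv> nmem s 2 v"
  defines "dr \<equiv> nmem s 8 (nreg s 2)"
  defines "t \<equiv> rmem s 0 v"
  defines "pres \<equiv> interval_prob_mach F (nmem s 6 q) (rmem s 1 q) q (narrow_hl (nmem s 14 v) dr) (narrow_lo (nmem s 14 v) (rmem s 6 v) t dr)
             (narrow_hh (nmem s 15 v) dr) (narrow_hi (nmem s 15 v) (rmem s 7 v) t dr)"
  shows "nmem (run F CHILD_PROB s) = nmem s" "rmem (run F CHILD_PROB s) = rmem s" "pc (run F CHILD_PROB s) = pc s"
    "rreg (run F CHILD_PROB s) 19 = (if rmem s 8 v = 0 then 0 else rmem s 9 v * pres / rmem s 8 v)"
    "rreg (run F CHILD_PROB s) 20 = (if (rmem s 1 q < t) = (0 < dr) then rmem s 10 v else 0)"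
  using assms unfolding CHILD_PROB_def by (auto simp: run_NARROW run_FEAT_PROB)

section \<open>Correctness of the program\<close>

context pg_setting
begin

abbreviation cdf_D :: "nat \<Rightarrow> real \<Rightarrow> real" where
  "cdf_D \<equiv> cdf_oracle D"
definition s0 :: mstate where "s0 = init_state d ts x S"

definition node_tree :: "nat \<Rightarrow> dtree" where "node_tree c = fst (infos ! c)"
definition node_kind :: "nat \<Rightarrow> nat" where "node_kind c = fst (node_record c (node_tree c))"
definition node_feat :: "nat \<Rightarrow> nat" where "node_feat c = fst (snd (node_record c (node_tree c)))"
definition node_left :: "nat \<Rightarrow> nat" where "node_left c = fst (snd (snd (node_record c (node_tree c))))"
definition node_right :: "nat \<Rightarrow> nat" where "node_right c = fst (snd (snd (snd (node_record c (node_tree c)))))"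
definition node_val :: "nat \<Rightarrow> real" where "node_val c = snd (snd (snd (snd (node_record c (node_tree c)))))"
definition node_parent :: "nat \<Rightarrow> nat option" where "node_parent c = info_parent (infos ! c)"
definition node_is_left :: "nat \<Rightarrow> bool" where "node_is_left c = info_dir (infos ! c)"

lemma s0_basic: "nreg s0 = (\<lambda>_. 0)" "rreg s0 = (\<lambda>_. 0)" "pc s0 = 0"
  by (simp_all add: s0_def init_state_def Let_def)

lemma s0_nmem:
  "nmem s0 0 (Suc 0) = nn"
  "c < nn \<Longrightarrow> nmem s0 (Suc 0) c = node_kind c"
  "c < nn \<Longrightarrow> nmem s0 2 c = node_feat c"
  "c < nn \<Longrightarrow> nmem s0 3 c = node_left c"
  "c < nn \<Longrightarrow> nmem s0 4 c = node_right c"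
  "q \<in> {1..d} \<Longrightarrow> nmem s0 6 q = (if q \<in> S then 1 else 0)"
  "nmem s0 7 = (\<lambda>_. 0)" "nmem s0 8 = (\<lambda>_. 0)" "nmem s0 9 = (\<lambda>_. 0)" "nmem s0 10 = (\<lambda>_. 0)"
  "nmem s0 11 = (\<lambda>_. 0)" "nmem s0 12 = (\<lambda>_. 0)" "nmem s0 13 = (\<lambda>_. 0)" "nmem s0 14 = (\<lambda>_. 0)" "nmem s0 15 = (\<lambda>_. 0)"
  by (auto simp: s0_def init_state_def Let_def arr_def enodes_nth node_kind_def node_feat_def node_left_def node_right_def node_tree_def)

lemma s0_rmem:
  "c < nn \<Longrightarrow> rmem s0 0 c = node_val c"
  "q \<in> {1..d} \<Longrightarrow> rmem s0 (Suc 0) q = x q"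
  by (auto simp: s0_def init_state_def Let_def arr_def enodes_nth node_val_def node_tree_def)

lemma node_Node:
  assumes "c < nn" "node_tree c = Node q t a b"
  shows "node_kind c = 1" "node_feat c = q" "node_val c = t" "node_left c = c + 1" "node_right c = c + 1 + tsize a"
    "c + 1 < nn" "c + 1 + tsize a < nn"
    "node_parent (c + 1) = Some c" "node_is_left (c + 1)" "root_path (c + 1) = root_path c @ [(q, t, True)]"
    "node_parent (c + 1 + tsize a) = Some c" "\<not> node_is_left (c + 1 + tsize a)" "root_path (c + 1 + tsize a) = root_path c @ [(q, t, False)]"
proof -
  have h: "c + tsize (Node q t a b) \<le> nn \<and>
   infos ! (c + 1) = (a, Some c, True, info_path (infos ! c) @ [(q, t, True)]) \<and>
   infos ! (c + 1 + tsize a) = (b, Some c, False, info_path (infos ! c) @ [(q, t, False)])"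
    using ens_infos_children[of c ts 0 q t a b] assms by (simp add: node_tree_def)
  show "node_kind c = 1" "node_feat c = q" "node_val c = t" "node_left c = c + 1" "node_right c = c + 1 + tsize a"
    using assms by (simp_all add: node_kind_def node_feat_def node_val_def node_left_def node_right_def)
  show "c + 1 < nn" "c + 1 + tsize a < nn" using h tsize_pos[of b] by simp_all
  show "node_parent (c + 1) = Some c" "node_is_left (c + 1)" "root_path (c + 1) = root_path c @ [(q, t, True)]"
    "node_parent (c + 1 + tsize a) = Some c" "\<not> node_is_left (c + 1 + tsize a)" "root_path (c + 1 + tsize a) = root_path c @ [(q, t, False)]"
    using h by (simp_all add: node_parent_def node_is_left_def root_path_def)
qed

lemma node_Leaf:
  assumes "node_tree c = Leaf y"
  shows "node_kind c = 0" "node_feat c = 0" "node_val c = y" "weight c = y"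
  using assms by (simp_all add: node_kind_def node_feat_def node_val_def weight_def node_tree_def[symmetric])

lemma node_cases: "(\<exists>y. node_tree c = Leaf y) \<or> (\<exists>q t a b. node_tree c = Node q t a b)"
  by (cases "node_tree c") auto

lemma node_kind_cases: "node_kind c = 0 \<or> node_kind c = 1"
  using node_cases[of c] by (auto simp: node_kind_def)

lemma weight_internal: "node_kind c = 1 \<Longrightarrow> weight c = 0"
  using node_cases[of c] by (auto simp: node_kind_def weight_def node_tree_def)

lemma weight_leaf: "node_kind c = 0 \<Longrightarrow> weight c = node_val c"
  using node_cases[of c] by (auto simp: node_kind_def weight_def node_tree_def node_val_def)

lemma node_parent_cases:
  assumes "c < nn"
  shows "node_parent c = None \<Longrightarrow> root_path c = []"
    and "node_parent c = Some v \<Longrightarrow> v < c \<and> node_kind v = 1 \<and> root_path c = root_path v @ [(node_feat v, node_val v, node_is_left c)] \<and>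
           (if node_is_left c then c = node_left v else c = node_right v)"
proof -
  have P: "(info_parent (infos ! c) = None \<and> info_path (infos ! c) = []) \<or>
   (\<exists>j<c. info_parent (infos ! c) = Some j \<and>
     (\<exists>q t a b. fst (infos ! j) = Node q t a b \<and>
        (if info_dir (infos ! c) then c = j + 1 else c = j + 1 + tsize a) \<and>
        info_path (infos ! c) = info_path (infos ! j) @ [(q, t, info_dir (infos ! c))]))"
    using ens_infos_parent[of c ts 0] assms by simp
  show "node_parent c = None \<Longrightarrow> root_path c = []" using P by (auto simp: node_parent_def root_path_def)
  assume "node_parent c = Some v"
  then obtain q t a b where "v < c" "fst (infos ! v) = Node q t a b"
        "(if node_is_left c then c = v + 1 else c = v + 1 + tsize a)"
        "root_path c = root_path v @ [(q, t, node_is_left c)]" using P by (auto simp: node_parent_def root_path_def node_is_left_def)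
  then show "v < c \<and> node_kind v = 1 \<and> root_path c = root_path v @ [(node_feat v, node_val v, node_is_left c)] \<and> (if node_is_left c then c = node_left v else c = node_right v)"
    by (simp add: node_kind_def node_feat_def node_val_def node_left_def node_right_def node_tree_def split: if_splits)
qed

lemma node_feats:
  assumes "c < nn"
  shows "set (map fst (root_path c)) \<subseteq> {1..d}" "node_kind c = 1 \<Longrightarrow> node_feat c \<in> {1..d}"
proof -
  have e: "infos ! c \<in> set infos" using assms by simp
  from ens_infos_feats[OF wf_ts e] show "set (map fst (root_path c)) \<subseteq> {1..d}" by (simp add: root_path_def)
  assume "node_kind c = 1"
  then obtain q t a b where "node_tree c = Node q t a b" using node_cases[of c] by (auto simp: node_kind_def)
  with ens_infos_feats[OF wf_ts e] show "node_feat c \<in> {1..d}" by (simp add: node_feat_def node_tree_def)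
qed

lemma length_root_path: "c < nn \<Longrightarrow> length (root_path c) \<le> c"
proof (induction c rule: less_induct)
  case (less c)
  show ?case
  proof (cases "node_parent c")
    case None
    then show ?thesis using node_parent_cases(1)[OF less.prems] by simp
  next
    case (Some v)
    then have "v < c" "root_path c = root_path v @ [(node_feat v, node_val v, node_is_left c)]" using node_parent_cases(2)[OF less.prems] by auto
    then show ?thesis using less.IH[of v] less.prems by simp
  qed
qed

definition ctx :: "mstate \<Rightarrow> bool" where
  "ctx s \<longleftrightarrow> nreg s 0 = 0 \<and> nreg s 10 = 1 \<and> nreg s 1 = nn \<and> nreg s 16 = Suc nn \<and> rreg s 11 = 0 \<and>
     nmem s 0 = nmem s0 0 \<and> nmem s 1 = nmem s0 1 \<and> nmem s 2 = nmem s0 2 \<and> nmem s 3 = nmem s0 3 \<and>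
     nmem s 4 = nmem s0 4 \<and> nmem s 6 = nmem s0 6 \<and> rmem s 0 = rmem s0 0 \<and> rmem s 1 = rmem s0 1"

definition parent_table :: "nat \<Rightarrow> nat \<Rightarrow> nat" where
  "parent_table j c = (if c < nn then (case node_parent c of None \<Rightarrow> 0 | Some v \<Rightarrow> if v < j then Suc v else 0) else 0)"

definition dir_table :: "nat \<Rightarrow> nat \<Rightarrow> nat" where
  "dir_table j c = (if c < nn \<and> (\<exists>v. node_parent c = Some v \<and> v < j) \<and> node_is_left c then 1 else 0)"

lemma parent_child: "c < nn \<Longrightarrow> node_parent c = Some j \<Longrightarrow> \<exists>q t a b. node_tree j = Node q t a b \<and> (c = node_left j \<or> c = node_right j)"
  using node_parent_cases(2)[of c j] node_cases[of j] by (auto simp: node_kind_def split: if_splits)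

lemma node_kind_Node: "node_tree j = Node q t a b \<Longrightarrow> node_kind j = 1" by (simp add: node_kind_def)

lemma leaf_not_parent: "node_kind j = 0 \<Longrightarrow> c < nn \<Longrightarrow> node_parent c \<noteq> Some j"
  using parent_child node_kind_Node by fastforce

lemma parent_table_Suc_leaf: "node_kind j = 0 \<Longrightarrow> parent_table (Suc j) = parent_table j"
proof (rule ext)
  fix c assume k: "node_kind j = 0"
  show "parent_table (Suc j) c = parent_table j c"
  proof (cases "c < nn")
    case True
    then have "node_parent c \<noteq> Some j" using leaf_not_parent[OF k] by blast
    then show ?thesis by (cases "node_parent c") (auto simp: parent_table_def less_Suc_eq)
  qed (simp add: parent_table_def)
qed

lemma dir_table_Suc_leaf: "node_kind j = 0 \<Longrightarrow> dir_table (Suc j) = dir_table j"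
proof (rule ext)
  fix c assume k: "node_kind j = 0"
  show "dir_table (Suc j) c = dir_table j c"
  proof (cases "c < nn")
    case True
    then have "node_parent c \<noteq> Some j" using leaf_not_parent[OF k] by blast
    then have "(\<exists>v. node_parent c = Some v \<and> v < Suc j) = (\<exists>v. node_parent c = Some v \<and> v < j)" by (auto simp: less_Suc_eq)
    then show ?thesis by (simp add: dir_table_def)
  qed (simp add: dir_table_def)
qed

lemma tables_Suc_Node:
  assumes "j < nn" "node_tree j = Node q t a b"
  shows "parent_table (Suc j) = (parent_table j)(node_left j := Suc j, node_right j := Suc j)"
    "dir_table (Suc j) = (dir_table j)(node_left j := 1, node_right j := 0)"
proof -
  note N = node_Node[OF assms]
  have o: "c < nn \<Longrightarrow> node_parent c = Some j \<Longrightarrow> c = node_left j \<or> c = node_right j" for c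
    using parent_child assms by blast
  show "parent_table (Suc j) = (parent_table j)(node_left j := Suc j, node_right j := Suc j)"
    using N o by (auto simp: parent_table_def fun_eq_iff less_Suc_eq split: option.splits)
  show "dir_table (Suc j) = (dir_table j)(node_left j := 1, node_right j := 0)"
    using N o by (auto simp: dir_table_def fun_eq_iff less_Suc_eq)
qed

lemma run_INIT: "ctx (run cdf_D INIT s0) \<and> nmem (run cdf_D INIT s0) 7 = (\<lambda>_. 0) \<and> nmem (run cdf_D INIT s0) 8 = (\<lambda>_. 0) \<and>
   nmem (run cdf_D INIT s0) 11 = (\<lambda>_. 0) \<and> rreg (run cdf_D INIT s0) 2 = 0 \<and> rreg (run cdf_D INIT s0) 4 = 0"
  by (simp add: INIT_def ctx_def s0_nmem s0_basic)

definition inv_parents :: "mstate \<Rightarrow> bool" where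
  "inv_parents s \<longleftrightarrow> ctx s \<and> nreg s 2 \<le> nn \<and> nmem s 7 = parent_table (nreg s 2) \<and> nmem s 8 = dir_table (nreg s 2) \<and>
     nmem s 11 = (\<lambda>_. 0) \<and> rreg s 2 = 0 \<and> rreg s 4 = 0"

lemma PARENT_STEP_correct:
  assumes "inv_parents s" "nreg s 2 < nreg s 1"
  shows "inv_parents (run cdf_D PARENT_STEP s) \<and> nn - nreg (run cdf_D PARENT_STEP s) 2 < nn - nreg s 2"
proof -
  obtain j where j: "nreg s 2 = j" "j < nn" using assms by (auto simp: inv_parents_def ctx_def)
  have C: "ctx s" using assms by (simp add: inv_parents_def)
  show ?thesis
  proof (cases "node_kind j = 0")
    case True
    then show ?thesis using assms j C
      by (simp add: PARENT_STEP_def inv_parents_def ctx_def s0_nmem parent_table_Suc_leaf dir_table_Suc_leaf)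
  next
    case False
    then obtain q t a b where sj: "node_tree j = Node q t a b" using node_cases[of j] by (auto dest: node_Leaf(1))
    note N = node_Node[OF j(2) sj]
    show ?thesis using assms j C N
      by (simp add: PARENT_STEP_def inv_parents_def ctx_def s0_nmem tables_Suc_Node[OF j(2) sj])
  qed
qed

lemma PARENTS_run:
  assumes "ctx s" "nmem s 7 = (\<lambda>_. 0)" "nmem s 8 = (\<lambda>_. 0)" "nmem s 11 = (\<lambda>_. 0)" "rreg s 2 = 0" "rreg s 4 = 0"
  shows "runs_within cdf_D PARENTS s (1 + (nn * (code_size PARENT_STEP + 2) + 2)) (\<lambda>s'. inv_parents s' \<and> nreg s' 2 = nn)"
proof -
  let ?s1 = "run cdf_D (Ins (NConst 2 0)) s"
  have I: "inv_parents ?s1" using assms by (simp add: inv_parents_def ctx_def parent_table_def dir_table_def fun_eq_iff split: option.split)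
  have W: "runs_within cdf_D (WhileN 2 1 PARENT_STEP) ?s1 ((nn - nreg ?s1 2) * (code_size PARENT_STEP + 2) + 2) (\<lambda>s'. inv_parents s' \<and> \<not> nreg s' 2 < nreg s' 1)"
  proof (rule runs_within_WhileN[where \<mu> = "\<lambda>s. nn - nreg s 2" and I = inv_parents, OF I])
    fix s assume "inv_parents s" "nreg s 2 < nreg s 1"
    from PARENT_STEP_correct[OF this] show "runs_within cdf_D PARENT_STEP s (code_size PARENT_STEP) (\<lambda>s'. inv_parents s' \<and> nn - nreg s' 2 < nn - nreg s 2)"
      by (intro runs_within_loop_free) (auto simp: PARENT_STEP_def)
  qed
  have "runs_within cdf_D PARENTS s (code_size (Ins (NConst 2 0)) + ((nn - nreg ?s1 2) * (code_size PARENT_STEP + 2) + 2)) (\<lambda>s'. inv_parents s' \<and> \<not> nreg s' 2 < nreg s' 1)"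
    unfolding PARENTS_def using runs_within_loop_free_seq[OF _ W] by simp
  then show ?thesis by (rule runs_within_mono) (auto simp: inv_parents_def ctx_def)
qed

definition PAR :: "nat \<Rightarrow> nat" where "PAR = parent_table nn"
definition DIR :: "nat \<Rightarrow> nat" where "DIR = dir_table nn"

lemma PAR_None: "c < nn \<Longrightarrow> node_parent c = None \<Longrightarrow> PAR c = 0"
  by (simp add: PAR_def parent_table_def)

lemma PAR_Some: "c < nn \<Longrightarrow> node_parent c = Some v \<Longrightarrow> PAR c = Suc v"
  using node_parent_cases(2)[of c v] by (simp add: PAR_def parent_table_def)

lemma PAR_pos: "c < nn \<Longrightarrow> 0 < PAR c \<Longrightarrow> node_parent c = Some (PAR c - 1)"
  using PAR_None[of c] PAR_Some[of c] by (cases "node_parent c") auto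

lemma DIR_Some: "c < nn \<Longrightarrow> node_parent c = Some v \<Longrightarrow> (0 < DIR c) = node_is_left c"
  using node_parent_cases(2)[of c v] by (auto simp: DIR_def dir_table_def)

lemma sat_feat_Cons[simp]: "sat_feat q ((q', t, b) # cs) v = ((q' = q \<longrightarrow> (v < t) = b) \<and> sat_feat q cs v)"
  by (simp add: sat_feat_def)

lemma sat_feat_Nil[simp]: "sat_feat q [] v" by (simp add: sat_feat_def)

definition box_ok :: "nat \<Rightarrow> nat \<Rightarrow> real \<Rightarrow> nat \<Rightarrow> real \<Rightarrow> bool" where
  "box_ok c hl lo hh hi \<longleftrightarrow> (\<forall>v. in_interval hl lo hh hi v = sat_feat (node_feat c) (root_path c) v)"

definition inv_boxes :: "mstate \<Rightarrow> bool" where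
  "inv_boxes s \<longleftrightarrow> ctx s \<and> nreg s 2 \<le> nn \<and> nmem s 7 = PAR \<and> nmem s 8 = DIR \<and>
     nmem s 11 = (\<lambda>_. 0) \<and> rreg s 2 = 0 \<and> rreg s 4 = 0 \<and>
     (\<forall>c<nreg s 2. box_ok c (nmem s 9 c) (rmem s 2 c) (nmem s 10 c) (rmem s 3 c))"

text \<open>While walking up from node \<open>c\<close>, the registers hold the current ancestor and the interval that
  the part of the root path of \<open>c\<close> below it imposes on the feature of \<open>c\<close>.\<close>

definition inv_box_walk :: "nat \<Rightarrow> constr list \<Rightarrow> mstate \<Rightarrow> bool" where
  "inv_box_walk c suf s \<longleftrightarrow> ctx s \<and> nmem s 7 = PAR \<and> nmem s 8 = DIR \<and>
     nmem s 11 = (\<lambda>_. 0) \<and> rreg s 2 = 0 \<and> rreg s 4 = 0 \<and>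
     (\<forall>c'<c. box_ok c' (nmem s 9 c') (rmem s 2 c') (nmem s 10 c') (rmem s 3 c')) \<and>
     nreg s 2 = c \<and> c < nn \<and> nreg s 7 = node_feat c \<and> nreg s 4 < nn \<and> nreg s 5 = PAR (nreg s 4) \<and>
     root_path c = root_path (nreg s 4) @ suf \<and> (\<forall>v. in_interval (nreg s 13) (rreg s 6) (nreg s 14) (rreg s 7) v = sat_feat (node_feat c) suf v)"

lemma BOX_WALK_STEP_loop_free: "loop_free BOX_WALK_STEP" by (simp add: BOX_WALK_STEP_def IfEq_def NARROW_def)

lemma BOX_WALK_STEP_correct:
  assumes "inv_box_walk c suf s" "0 < nreg s 5"
  shows "\<exists>suf'. inv_box_walk c suf' (run cdf_D BOX_WALK_STEP s) \<and> length (root_path (nreg (run cdf_D BOX_WALK_STEP s) 4)) < length (root_path (nreg s 4))"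
proof -
  obtain cur where cur: "nreg s 4 = cur" "cur < nn" using assms by (auto simp: inv_box_walk_def)
  have C: "ctx s" using assms by (simp add: inv_box_walk_def)
  have pr: "nreg s 5 = PAR cur" using assms cur by (simp add: inv_box_walk_def)
  obtain v where pv: "node_parent cur = Some v" using PAR_pos[OF cur(2)] assms(2) pr by auto
  then have PV: "PAR cur = Suc v" using PAR_Some[OF cur(2)] by simp
  have nv: "v < cur" "node_kind v = 1" "root_path cur = root_path v @ [(node_feat v, node_val v, node_is_left cur)]" using node_parent_cases(2)[OF cur(2) pv] by auto
  have vn: "v < nn" using nv cur by simp
  have dr: "(0 < DIR cur) = node_is_left cur" using DIR_Some[OF cur(2) pv] .
  let ?suf' = "(node_feat v, node_val v, node_is_left cur) # suf"
  have pc: "root_path c = root_path v @ ?suf'" using assms nv cur by (simp add: inv_box_walk_def)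
  have len: "length (root_path v) < length (root_path cur)" using nv by simp
  show ?thesis
  proof (intro exI[of _ ?suf'] conjI)
    show "inv_box_walk c ?suf' (run cdf_D BOX_WALK_STEP s)"
    proof (cases "node_feat v = node_feat c")
      case True
      then show ?thesis using assms cur C pr PV vn dr pc
        by (simp add: inv_box_walk_def ctx_def BOX_WALK_STEP_def IfEq_def run_NARROW in_interval_narrow s0_nmem s0_rmem, blast)
    next
      case False
      then show ?thesis using assms cur C pr PV vn dr pc
        by (auto simp: inv_box_walk_def ctx_def BOX_WALK_STEP_def IfEq_def s0_nmem s0_rmem)
    qed
    show "length (root_path (nreg (run cdf_D BOX_WALK_STEP s) 4)) < length (root_path (nreg s 4))"
      using assms cur C pr PV vn len by (simp add: BOX_WALK_STEP_def IfEq_def ctx_def run_NARROW s0_nmem)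
  qed
qed

lemma BOX_STORE_correct:
  assumes "inv_box_walk c suf s" "\<not> nreg s 0 < nreg s 5"
  shows "inv_boxes (run cdf_D BOX_STORE s) \<and> nreg (run cdf_D BOX_STORE s) 2 = Suc c"
proof -
  obtain cur where cur: "nreg s 4 = cur" "cur < nn" using assms by (auto simp: inv_box_walk_def)
  have "PAR cur = 0" using assms cur by (simp add: inv_box_walk_def ctx_def)
  then have "node_parent cur = None" using PAR_Some[OF cur(2)] by (cases "node_parent cur") auto
  then have "root_path cur = []" using node_parent_cases(1)[OF cur(2)] by simp
  then have suf: "root_path c = suf" using assms cur by (simp add: inv_box_walk_def)
  show ?thesis using assms suf
    by (auto simp: inv_box_walk_def inv_boxes_def ctx_def BOX_STORE_def box_ok_def less_Suc_eq)
qed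

definition K_box :: nat where
  "K_box = code_size BOX_INIT + ((nn * (code_size BOX_WALK_STEP + 2) + 2) + code_size BOX_STORE)"

lemma BOX_STEP_correct:
  assumes "inv_boxes s" "nreg s 2 < nreg s 1"
  shows "runs_within cdf_D BOX_STEP s K_box (\<lambda>s'. inv_boxes s' \<and> nn - nreg s' 2 < nn - nreg s 2)"
proof -
  obtain c where c: "nreg s 2 = c" "c < nn" using assms by (auto simp: inv_boxes_def ctx_def)
  let ?s1 = "run cdf_D BOX_INIT s"
  have C: "ctx s" using assms by (simp add: inv_boxes_def)
  have I: "inv_box_walk c [] ?s1" using assms c C unfolding inv_box_walk_def inv_boxes_def BOX_INIT_def ctx_def
    by (simp add: s0_nmem in_interval_def)
  have W: "runs_within cdf_D (WhileN 0 5 BOX_WALK_STEP) ?s1 (length (root_path (nreg ?s1 4)) * (code_size BOX_WALK_STEP + 2) + 2)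
      (\<lambda>s'. (\<exists>suf. inv_box_walk c suf s') \<and> \<not> nreg s' 0 < nreg s' 5)"
  proof (rule runs_within_WhileN[where \<mu> = "\<lambda>s. length (root_path (nreg s 4))" and I = "\<lambda>s. \<exists>suf. inv_box_walk c suf s"])
    show "\<exists>suf. inv_box_walk c suf ?s1" using I by blast
    fix s assume "\<exists>suf. inv_box_walk c suf s" "nreg s 0 < nreg s 5"
    then obtain suf where "inv_box_walk c suf s" "0 < nreg s 5" by (auto simp: inv_box_walk_def ctx_def)
    from BOX_WALK_STEP_correct[OF this] show "runs_within cdf_D BOX_WALK_STEP s (code_size BOX_WALK_STEP) (\<lambda>s'. (\<exists>suf. inv_box_walk c suf s') \<and> length (root_path (nreg s' 4)) < length (root_path (nreg s 4)))"
      by (intro runs_within_loop_free BOX_WALK_STEP_loop_free) blast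
  qed
  have W2: "runs_within cdf_D (WhileN 0 5 BOX_WALK_STEP ;; BOX_STORE) ?s1 ((length (root_path (nreg ?s1 4)) * (code_size BOX_WALK_STEP + 2) + 2) + code_size BOX_STORE)
      (\<lambda>s'. inv_boxes s' \<and> nreg s' 2 = Suc c)"
    by (rule runs_within_seq_loop_free[OF W]) (auto simp: BOX_STORE_def dest: BOX_STORE_correct)
  have E: "runs_within cdf_D BOX_STEP s (code_size BOX_INIT + ((length (root_path (nreg ?s1 4)) * (code_size BOX_WALK_STEP + 2) + 2) + code_size BOX_STORE))
      (\<lambda>s'. inv_boxes s' \<and> nreg s' 2 = Suc c)"
    unfolding BOX_STEP_def by (rule runs_within_loop_free_seq[OF _ W2]) (simp add: BOX_INIT_def)
  have L: "length (root_path (nreg ?s1 4)) \<le> nn"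
  proof -
    have "nreg ?s1 4 = c" using C c by (simp add: ctx_def BOX_INIT_def)
    then show ?thesis using length_root_path[OF c(2)] c by simp
  qed
  have L2: "length (root_path (nreg ?s1 4)) * (code_size BOX_WALK_STEP + 2) \<le> nn * (code_size BOX_WALK_STEP + 2)" by (rule mult_right_mono[OF L]) simp
  show ?thesis unfolding K_box_def
    by (rule runs_within_mono[OF E]) (use L2 c in auto)
qed

lemma BOXES_run:
  assumes "inv_parents s" "nreg s 2 = nn"
  shows "runs_within cdf_D BOXES s (1 + (nn * (K_box + 2) + 2)) (\<lambda>s'. inv_boxes s' \<and> nreg s' 2 = nn)"
proof -
  let ?s1 = "run cdf_D (Ins (NConst 2 0)) s"
  have I: "inv_boxes ?s1" using assms by (simp add: inv_parents_def inv_boxes_def ctx_def PAR_def DIR_def)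
  have W: "runs_within cdf_D (WhileN 2 1 BOX_STEP) ?s1 ((nn - nreg ?s1 2) * (K_box + 2) + 2) (\<lambda>s'. inv_boxes s' \<and> \<not> nreg s' 2 < nreg s' 1)"
    by (rule runs_within_WhileN[where \<mu> = "\<lambda>s. nn - nreg s 2" and I = inv_boxes, OF I]) (rule BOX_STEP_correct)
  have "runs_within cdf_D BOXES s (code_size (Ins (NConst 2 0)) + ((nn - nreg ?s1 2) * (K_box + 2) + 2)) (\<lambda>s'. inv_boxes s' \<and> \<not> nreg s' 2 < nreg s' 1)"
    unfolding BOXES_def using runs_within_loop_free_seq[OF _ W] by simp
  then show ?thesis by (rule runs_within_mono) (auto simp: inv_boxes_def ctx_def)
qed

lemma sat_feat_append: "sat_feat q (a @ b) v = (sat_feat q a v \<and> sat_feat q b v)"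
  by (simp add: sat_feat_def)

lemma PASS_BOX_loop_free: "loop_free PASS_BOX" by (simp add: PASS_BOX_def IfEq_def BOX_MERGE_def)

lemma run_PASS_BOX:
  assumes "ctx s" "nreg s 2 = c" "c < nn"
  shows "nmem (run cdf_D PASS_BOX s) = nmem s" "rmem (run cdf_D PASS_BOX s) = rmem s" "pc (run cdf_D PASS_BOX s) = pc s"
    "nreg (run cdf_D PASS_BOX s) 7 = node_feat c"
    "r \<notin> {7, 13, 14, 8, 9} \<Longrightarrow> nreg (run cdf_D PASS_BOX s) r = nreg s r"
    "r \<notin> {6, 7, 9} \<Longrightarrow> rreg (run cdf_D PASS_BOX s) r = rreg s r"
  using assms by (auto simp: PASS_BOX_def IfEq_def run_BOX_MERGE ctx_def s0_nmem)

lemma PASS_BOX_interval: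
  assumes "ctx s" "nreg s 2 = c" "c < nn"
    and "box_ok c (nmem s 9 c) (rmem s 2 c) (nmem s 10 c) (rmem s 3 c)"
    and "nmem s 11 (node_feat c) = nreg s 11 \<Longrightarrow> \<forall>v. in_interval (nmem s 12 (node_feat c)) (rmem s 4 (node_feat c)) (nmem s 13 (node_feat c)) (rmem s 5 (node_feat c)) v = sat_feat (node_feat c) pfx v"
    and "nmem s 11 (node_feat c) \<noteq> nreg s 11 \<Longrightarrow> \<forall>v. sat_feat (node_feat c) pfx v"
  shows "in_interval (nreg (run cdf_D PASS_BOX s) 13) (rreg (run cdf_D PASS_BOX s) 6) (nreg (run cdf_D PASS_BOX s) 14) (rreg (run cdf_D PASS_BOX s) 7) v =
     sat_feat (node_feat c) (pfx @ root_path c) v"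
proof (cases "nmem s 11 (node_feat c) = nreg s 11")
  case True
  then show ?thesis using assms by (simp add: PASS_BOX_def IfEq_def run_BOX_MERGE ctx_def s0_nmem box_ok_def sat_feat_append, blast)
next
  case False
  then show ?thesis using assms by (auto simp: PASS_BOX_def IfEq_def ctx_def s0_nmem box_ok_def sat_feat_append)
qed

lemma PASS_FEAT_PROB_loop_free: "loop_free PASS_FEAT_PROB" by (simp add: PASS_FEAT_PROB_def FEAT_PROB_def)
lemma PASS_PATH_PROB_loop_free: "loop_free PASS_PATH_PROB" by (simp add: PASS_PATH_PROB_def CHILD_PROB_def FEAT_PROB_def NARROW_def ROOT_PROB_def)
lemma PASS_ACCUMULATE_loop_free: "loop_free PASS_ACCUMULATE" by (simp add: PASS_ACCUMULATE_def ACCUMULATE_def IfEq_def)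

lemma run_PASS_FEAT_PROB:
  assumes "nreg u 0 = 0" "nreg u 2 = c"
  shows "nmem (run cdf_D PASS_FEAT_PROB u) = (nmem u)(14 := (nmem u 14)(c := nreg u 13), 15 := (nmem u 15)(c := nreg u 14))"
    "rmem (run cdf_D PASS_FEAT_PROB u) = (rmem u)(6 := (rmem u 6)(c := rreg u 6), 7 := (rmem u 7)(c := rreg u 7),
        8 := (rmem u 8)(c := interval_prob_mach cdf_D (nmem u 6 (nreg u 7)) (rmem u 1 (nreg u 7)) (nreg u 7) (nreg u 13) (rreg u 6) (nreg u 14) (rreg u 7)))"
    "nreg (run cdf_D PASS_FEAT_PROB u) 5 = nmem u 7 c"
    "r \<notin> {9, 5} \<Longrightarrow> nreg (run cdf_D PASS_FEAT_PROB u) r = nreg u r"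
    "r \<notin> {9, 12, 13, 14, 15} \<Longrightarrow> rreg (run cdf_D PASS_FEAT_PROB u) r = rreg u r"
  using assms by (simp_all add: PASS_FEAT_PROB_def run_FEAT_PROB)

lemma run_PASS_PATH_PROB:
  assumes "nreg X 0 = 0" "rreg X 11 = 0" "nreg X 10 = 1"
  shows "nmem (run cdf_D PASS_PATH_PROB X) = nmem X" "rmem (run cdf_D PASS_PATH_PROB X) = rmem X"
    "rreg (run cdf_D PASS_PATH_PROB X) 19 = (if 0 < nreg X 5 then
        (if rmem X 8 (nreg X 5 - 1) = 0 then 0 else rmem X 9 (nreg X 5 - 1) *
          interval_prob_mach cdf_D (nmem X 6 (nmem X 2 (nreg X 5 - 1))) (rmem X 1 (nmem X 2 (nreg X 5 - 1))) (nmem X 2 (nreg X 5 - 1))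
            (narrow_hl (nmem X 14 (nreg X 5 - 1)) (nmem X 8 (nreg X 2)))
            (narrow_lo (nmem X 14 (nreg X 5 - 1)) (rmem X 6 (nreg X 5 - 1)) (rmem X 0 (nreg X 5 - 1)) (nmem X 8 (nreg X 2)))
            (narrow_hh (nmem X 15 (nreg X 5 - 1)) (nmem X 8 (nreg X 2)))
            (narrow_hi (nmem X 15 (nreg X 5 - 1)) (rmem X 7 (nreg X 5 - 1)) (rmem X 0 (nreg X 5 - 1)) (nmem X 8 (nreg X 2)))
          / rmem X 8 (nreg X 5 - 1))
       else rreg X 5)"
    "rreg (run cdf_D PASS_PATH_PROB X) 20 = (if 0 < nreg X 5 then
        (if (rmem X 1 (nmem X 2 (nreg X 5 - 1)) < rmem X 0 (nreg X 5 - 1)) = (0 < nmem X 8 (nreg X 2))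
         then rmem X 10 (nreg X 5 - 1) else 0) else 1)"
  using assms by (simp_all add: PASS_PATH_PROB_def run_CHILD_PROB ROOT_PROB_def)

lemma run_PASS_ACCUMULATE:
  assumes "nreg Y 0 = 0" "nreg Y 10 = 1" "nreg Y 2 = c"
  shows "nmem (run cdf_D PASS_ACCUMULATE Y) = nmem Y"
    "rmem (run cdf_D PASS_ACCUMULATE Y) = (rmem Y)(9 := (rmem Y 9)(c := rreg Y 19), 10 := (rmem Y 10)(c := rreg Y 20),
       11 := (if nmem Y 1 c = 0 \<and> nreg Y 3 = 0 then (rmem Y 11)(c := rreg Y 19) else rmem Y 11))"
    "rreg (run cdf_D PASS_ACCUMULATE Y) 1 = rreg Y 1 + (if nmem Y 1 c = 0 then rmem Y 0 c * rreg Y 19 else 0)"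
    "rreg (run cdf_D PASS_ACCUMULATE Y) 4 = rreg Y 4 + (if nmem Y 1 c = 0 \<and> nreg Y 3 = 0 then rmem Y 0 c * rreg Y 20 else 0)"
    "nreg (run cdf_D PASS_ACCUMULATE Y) 2 = Suc c"
  using assms by (auto simp: PASS_ACCUMULATE_def ACCUMULATE_def IfEq_def fun_eq_iff)

lemma interval_prob_mach_eq: "q \<in> {1..d} \<Longrightarrow> interval_prob_mach cdf_D (nmem s0 6 q) (rmem s0 (Suc 0) q) q hl lo hh hi = interval_prob q hl lo hh hi"
  by (simp add: interval_prob_mach_def interval_prob_def s0_nmem s0_rmem)

definition ctx_boxes :: "mstate \<Rightarrow> bool" where
  "ctx_boxes s \<longleftrightarrow> ctx s \<and> nmem s 7 = PAR \<and> nmem s 8 = DIR \<and>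
     (\<forall>c<nn. box_ok c (nmem s 9 c) (rmem s 2 c) (nmem s 10 c) (rmem s 3 c))"

definition table_ok :: "nat \<Rightarrow> constr list \<Rightarrow> mstate \<Rightarrow> bool" where
  "table_ok k pfx s \<longleftrightarrow> (\<forall>q\<in>{1..d}. (nmem s 11 q = Suc k \<longrightarrow>
        (\<forall>v. in_interval (nmem s 12 q) (rmem s 4 q) (nmem s 13 q) (rmem s 5 q) v = sat_feat q pfx v)) \<and>
      (nmem s 11 q \<noteq> Suc k \<longrightarrow> (\<forall>v. sat_feat q pfx v)))"

text \<open>In iteration \<open>k > 0\<close> of the outer loop, \<open>pfx\<close> is the root path of node \<open>k - 1\<close> (if it is a leaf);
  iteration 0 runs with the empty prefix and also records \<open>f x\<close>, the first moment and the
  reach probabilities of the leaves.\<close>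

definition pass_pre :: "nat \<Rightarrow> constr list \<Rightarrow> mstate \<Rightarrow> bool" where
  "pass_pre k pfx s \<longleftrightarrow> ctx_boxes s \<and> nreg s 3 = k \<and> nreg s 11 = Suc k \<and> table_ok k pfx s \<and> rreg s 5 = path_prob pfx \<and>
     set (map fst pfx) \<subseteq> {1..d} \<and> (k = 0 \<longrightarrow> pfx = [])"

definition pass_inv :: "nat \<Rightarrow> constr list \<Rightarrow> mstate \<Rightarrow> mstate \<Rightarrow> bool" where
  "pass_inv k pfx s1 s \<longleftrightarrow> pass_pre k pfx s \<and> frame PASS s1 s \<and> nreg s 2 \<le> nn \<and>
     (\<forall>c<nreg s 2. node_kind c = 1 \<longrightarrow> (\<forall>v. in_interval (nmem s 14 c) (rmem s 6 c) (nmem s 15 c) (rmem s 7 c) v = sat_feat (node_feat c) (pfx @ root_path c) v) \<and>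
        rmem s 8 c = feat_prob (node_feat c) (pfx @ root_path c)) \<and>
     (\<forall>c<nreg s 2. rmem s 9 c = path_prob (pfx @ root_path c) \<and> rmem s 10 c = of_bool (sat_path (root_path c) x)) \<and>
     rreg s 1 = (\<Sum>m<nreg s 2. weight m * path_prob (pfx @ root_path m)) \<and>
     (k = 0 \<longrightarrow> (\<forall>c<nreg s 2. node_kind c = 0 \<longrightarrow> rmem s 11 c = path_prob (root_path c)) \<and>
        rreg s 4 = rreg s1 4 + (\<Sum>m<nreg s 2. weight m * of_bool (sat_path (root_path m) x))) \<and>
     (k \<noteq> 0 \<longrightarrow> rmem s 11 = rmem s1 11 \<and> rreg s 4 = rreg s1 4)"

lemma frame_PASS_STEP: "frame PASS s1 s \<Longrightarrow> frame PASS_STEP s s' \<Longrightarrow> frame PASS s1 s'"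
  unfolding frame_def using same_except_trans[of "written wr_nreg PASS" "written wr_rreg PASS" "written wr_nmem PASS" "written wr_rmem PASS" s1 s
      "written wr_nreg PASS_STEP" "written wr_rreg PASS_STEP" "written wr_nmem PASS_STEP" "written wr_rmem PASS_STEP" s']
  by (simp add: PASS_def Un_assoc)

lemma PASS_PATH_PROB_frame:
  "r \<notin> {12, 7, 13, 14, 17, 9} \<Longrightarrow> nreg (run cdf_D PASS_PATH_PROB X) r = nreg X r"
  "r \<notin> {6, 7, 8, 9, 12, 13, 14, 15, 17, 18, 19, 20} \<Longrightarrow> rreg (run cdf_D PASS_PATH_PROB X) r = rreg X r"
proof -
  have "frame PASS_PATH_PROB X (run cdf_D PASS_PATH_PROB X)" by (rule run_frame[OF PASS_PATH_PROB_loop_free])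
  then have f: "same_except {12, 7, 13, 14, 17, 9} {6, 7, 8, 9, 12, 13, 14, 15, 17, 18, 19, 20} {} {} X (run cdf_D PASS_PATH_PROB X)"
    unfolding frame_def by (rule same_except_mono) (auto simp: PASS_PATH_PROB_def CHILD_PROB_def FEAT_PROB_def NARROW_def ROOT_PROB_def)
  show "r \<notin> {12, 7, 13, 14, 17, 9} \<Longrightarrow> nreg (run cdf_D PASS_PATH_PROB X) r = nreg X r" by (rule same_except_nreg[OF f])
  show "r \<notin> {6, 7, 8, 9, 12, 13, 14, 15, 17, 18, 19, 20} \<Longrightarrow> rreg (run cdf_D PASS_PATH_PROB X) r = rreg X r" by (rule same_except_rreg[OF f])
qed

lemma PASS_STEP_loop_free: "loop_free PASS_STEP" by (simp add: PASS_STEP_def PASS_UPDATE_def PASS_BOX_loop_free PASS_FEAT_PROB_loop_free PASS_PATH_PROB_loop_free PASS_ACCUMULATE_loop_free)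

lemma path_prob_child:
  assumes c: "c < nn" "node_parent c = Some v" and pfx: "set (map fst pfx) \<subseteq> {1..d}"
    and box: "\<And>y. in_interval hl lo hh hi y = sat_feat (node_feat v) (pfx @ root_path v) y"
  shows "(if feat_prob (node_feat v) (pfx @ root_path v) = 0 then 0
          else path_prob (pfx @ root_path v) *
            interval_prob (node_feat v) (narrow_hl hl (DIR c)) (narrow_lo hl lo (node_val v) (DIR c))
              (narrow_hh hh (DIR c)) (narrow_hi hh hi (node_val v) (DIR c)) /
            feat_prob (node_feat v) (pfx @ root_path v))
       = path_prob (pfx @ root_path c)"
proof -
  have vn: "v < nn" and kv: "node_kind v = 1"
    and path: "root_path c = root_path v @ [(node_feat v, node_val v, node_is_left c)]"
    using node_parent_cases(2)[OF c] c by auto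
  have fv: "node_feat v \<in> {1..d}" using node_feats(2)[OF vn kv] .
  have "interval_prob (node_feat v) (narrow_hl hl (DIR c)) (narrow_lo hl lo (node_val v) (DIR c))
      (narrow_hh hh (DIR c)) (narrow_hi hh hi (node_val v) (DIR c)) =
    feat_prob (node_feat v) ((pfx @ root_path v) @ [(node_feat v, node_val v, node_is_left c)])"
    by (rule interval_prob_eq_feat_prob) (use box DIR_Some[OF c] in \<open>simp add: in_interval_narrow sat_feat_append\<close>)
  moreover have "set (map fst (pfx @ root_path v)) \<subseteq> {1..d}"
    using pfx node_feats(1)[OF vn] by auto
  ultimately show ?thesis
    using path_prob_snoc[OF _ fv, of "pfx @ root_path v"] path by simp
qed

lemma sat_root_path_child:
  assumes "c < nn" "node_parent c = Some v"
  shows "(if (x (node_feat v) < node_val v) = node_is_left c then of_bool (sat_path (root_path v) x) else 0) =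
    (of_bool (sat_path (root_path c) x) :: real)"
  using node_parent_cases(2)[OF assms] by (simp add: of_bool_def sat_path_append sat_path_def)

lemma PASS_STEP_correct:
  assumes pass_inv: "pass_inv k pfx s1 s" and lt: "nreg s 2 < nreg s 1"
  shows "pass_inv k pfx s1 (run cdf_D PASS_STEP s) \<and> nn - nreg (run cdf_D PASS_STEP s) 2 < nn - nreg s 2"
proof -
  have O: "pass_pre k pfx s" using pass_inv by (simp add: pass_inv_def)
  have C3: "ctx_boxes s" using O by (simp add: pass_pre_def)
  have CB: "ctx s" using C3 by (simp add: ctx_boxes_def)
  obtain c where c: "nreg s 2 = c" "c < nn" using lt CB by (auto simp: ctx_def)
  define u where "u = run cdf_D PASS_BOX s"
  define X where "X = run cdf_D PASS_FEAT_PROB u"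
  define Y where "Y = run cdf_D PASS_PATH_PROB X"
  define s' where "s' = run cdf_D PASS_ACCUMULATE Y"
  have run: "run cdf_D PASS_STEP s = s'" by (simp add: PASS_STEP_def PASS_UPDATE_def u_def X_def Y_def s'_def)
  note U = run_PASS_BOX[OF CB c, folded u_def]
  have u0: "nreg u 0 = 0" "nreg u 2 = c" "nreg u 10 = 1" "rreg u 11 = 0" "nreg u 3 = k"
    using U(5)[of 0] U(5)[of 2] U(5)[of 10] U(6)[of 11] U(5)[of 3] CB c O by (auto simp: ctx_def pass_pre_def)
  note XX = run_PASS_FEAT_PROB[OF u0(1,2), folded X_def]
  have X0: "nreg X 0 = 0" "rreg X 11 = 0" "nreg X 10 = 1" "nreg X 2 = c" "nreg X 3 = k"
    using XX(4)[of 0] XX(5)[of 11] XX(4)[of 10] XX(4)[of 2] XX(4)[of 3] u0 by auto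
  note YY = run_PASS_PATH_PROB[OF X0(1-3), folded Y_def]
  have Y0: "nreg Y 0 = 0" "nreg Y 10 = 1" "nreg Y 2 = c" "nreg Y 3 = k"
    using PASS_PATH_PROB_frame(1)[of 0 X] PASS_PATH_PROB_frame(1)[of 10 X] PASS_PATH_PROB_frame(1)[of 2 X] PASS_PATH_PROB_frame(1)[of 3 X] X0
    by (auto simp: Y_def)
  note SS = run_PASS_ACCUMULATE[OF Y0(1-3), folded s'_def]
  have fr0: "frame PASS_STEP s s'" using run_frame[OF PASS_STEP_loop_free, of s cdf_D] run by simp
  have fr: "same_except {2,5,7,8,9,12,13,14,17} {1,4,6,7,8,9,12,13,14,15,17,18,19,20} {14,15} {6,7,8,9,10,11} s s'"
    using fr0 unfolding frame_def
    by (rule same_except_mono) (auto simp: PASS_STEP_def PASS_UPDATE_def PASS_BOX_def PASS_FEAT_PROB_def PASS_PATH_PROB_def PASS_ACCUMULATE_def BOX_MERGE_def FEAT_PROB_def CHILD_PROB_def NARROW_def ROOT_PROB_def ACCUMULATE_def IfEq_def)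
  have nr: "\<And>r. r \<notin> {2,5,7,8,9,12,13,14,17} \<Longrightarrow> nreg s' r = nreg s r" using fr by (simp add: same_except_def)
  have rr: "\<And>r. r \<notin> {1,4,6,7,8,9,12,13,14,15,17,18,19,20} \<Longrightarrow> rreg s' r = rreg s r" using fr by (simp add: same_except_def)
  define P' where "P' = rreg Y 19"
  define I' where "I' = rreg Y 20"
  define PO where "PO = interval_prob_mach cdf_D (nmem s 6 (node_feat c)) (rmem s 1 (node_feat c)) (node_feat c) (nreg u 13) (rreg u 6) (nreg u 14) (rreg u 7)"
  have kdc: "nmem s 1 c = node_kind c" using CB c by (simp add: ctx_def s0_nmem)
  have nm: "nmem s' = (nmem s)(14 := (nmem s 14)(c := nreg u 13), 15 := (nmem s 15)(c := nreg u 14))"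
    using SS(1) YY(1) XX(1) U(1) by simp
  have rm: "rmem s' = (rmem s)(6 := (rmem s 6)(c := rreg u 6), 7 := (rmem s 7)(c := rreg u 7), 8 := (rmem s 8)(c := PO),
      9 := (rmem s 9)(c := P'), 10 := (rmem s 10)(c := I'), 11 := (if node_kind c = 0 \<and> k = 0 then (rmem s 11)(c := P') else rmem s 11))"
    using SS(2) YY(1,2) XX(1,2) U(1,2,4) Y0 kdc unfolding P'_def I'_def PO_def by (simp add: fun_eq_iff)
  have Gv: "table_ok k pfx s" and pb: "rreg s 5 = path_prob pfx" and pf: "set (map fst pfx) \<subseteq> {1..d}"
    and k0: "k = 0 \<Longrightarrow> pfx = []" and stk: "nreg s 11 = Suc k"
    using O by (auto simp: pass_pre_def)
  have merged_box: "\<forall>v. in_interval (nreg u 13) (rreg u 6) (nreg u 14) (rreg u 7) v = sat_feat (node_feat c) (pfx @ root_path c) v" if kc: "node_kind c = 1"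
  proof
    fix v
    have fq: "node_feat c \<in> {1..d}" using node_feats(2)[OF c(2) kc] .
    have ib: "box_ok c (nmem s 9 c) (rmem s 2 c) (nmem s 10 c) (rmem s 3 c)" using C3 c by (simp add: ctx_boxes_def)
    show "in_interval (nreg u 13) (rreg u 6) (nreg u 14) (rreg u 7) v = sat_feat (node_feat c) (pfx @ root_path c) v"
      unfolding u_def
      by (rule PASS_BOX_interval[OF CB c ib]) (use Gv fq stk in \<open>auto simp: table_ok_def\<close>)
  qed
  have merged_prob: "PO = feat_prob (node_feat c) (pfx @ root_path c)" if kc: "node_kind c = 1"
  proof -
    have fq: "node_feat c \<in> {1..d}" using node_feats(2)[OF c(2) kc] .
    have "PO = interval_prob (node_feat c) (nreg u 13) (rreg u 6) (nreg u 14) (rreg u 7)"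
      using CB fq interval_prob_mach_eq by (simp add: PO_def ctx_def)
    also have "\<dots> = feat_prob (node_feat c) (pfx @ root_path c)" by (rule interval_prob_eq_feat_prob) (use merged_box[OF kc] in blast)
    finally show ?thesis .
  qed
  have X5: "nreg X 5 = PAR c" using XX(3) U(1) C3 by (simp add: ctx_boxes_def)
  have reach_values: "P' = path_prob (pfx @ root_path c) \<and> I' = of_bool (sat_path (root_path c) x)"
  proof (cases "node_parent c")
    case None
    then have "PAR c = 0" "root_path c = []" using PAR_None[OF c(2)] node_parent_cases(1)[OF c(2)] by auto
    moreover have "rreg X 5 = rreg s 5" using XX(5)[of 5] U(6)[of 5] by simp
    ultimately show ?thesis using X5 pb unfolding P'_def I'_def YY(3,4) by (simp add: of_bool_def)
  next
    case (Some v)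
    have vc: "v < c" and kv: "node_kind v = 1"
      using node_parent_cases(2)[OF c(2) Some] by auto
    have vn: "v < nn" using vc c by simp
    have fv: "node_feat v \<in> {1..d}" using node_feats(2)[OF vn kv] .
    have PV: "PAR c = Suc v" using PAR_Some[OF c(2) Some] .
    have ILv: "(\<forall>y. in_interval (nmem s 14 v) (rmem s 6 v) (nmem s 15 v) (rmem s 7 v) y = sat_feat (node_feat v) (pfx @ root_path v) y) \<and>
        rmem s 8 v = feat_prob (node_feat v) (pfx @ root_path v)" "rmem s 9 v = path_prob (pfx @ root_path v)" "rmem s 10 v = of_bool (sat_path (root_path v) x)"
      using pass_inv vc kv c by (auto simp: pass_inv_def)
    have bX: "nmem X 2 v = node_feat v" "nmem X 6 = nmem s0 6" "rmem X 1 = rmem s0 1" "nmem X 14 v = nmem s 14 v"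
       "nmem X 15 v = nmem s 15 v" "rmem X 6 v = rmem s 6 v" "rmem X 7 v = rmem s 7 v" "rmem X 0 v = node_val v"
       "nmem X 8 (nreg X 2) = DIR c" "rmem X 8 v = rmem s 8 v" "rmem X 9 v = rmem s 9 v" "rmem X 10 v = rmem s 10 v"
      using XX(1,2) U(1,2) CB C3 vc vn X0 by (auto simp: ctx_def ctx_boxes_def s0_nmem s0_rmem)
    have "P' = (if feat_prob (node_feat v) (pfx @ root_path v) = 0 then 0
        else path_prob (pfx @ root_path v) *
          interval_prob (node_feat v) (narrow_hl (nmem s 14 v) (DIR c)) (narrow_lo (nmem s 14 v) (rmem s 6 v) (node_val v) (DIR c))
            (narrow_hh (nmem s 15 v) (DIR c)) (narrow_hi (nmem s 15 v) (rmem s 7 v) (node_val v) (DIR c)) /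
          feat_prob (node_feat v) (pfx @ root_path v))"
      unfolding P'_def YY(3) X5 PV using bX ILv interval_prob_mach_eq[OF fv] by simp
    also have "\<dots> = path_prob (pfx @ root_path c)"
      by (rule path_prob_child[OF c(2) Some pf]) (use ILv in blast)
    finally have P1: "P' = path_prob (pfx @ root_path c)" .
    have "I' = (if (x (node_feat v) < node_val v) = node_is_left c then of_bool (sat_path (root_path v) x) else 0)"
      unfolding I'_def YY(4) X5 PV using bX ILv DIR_Some[OF c(2) Some] s0_rmem(2)[OF fv] by simp
    also have "\<dots> = of_bool (sat_path (root_path c) x)"
      by (rule sat_root_path_child[OF c(2) Some])
    finally show ?thesis using P1 by simp
  qed
  have Yr: "rreg Y 1 = rreg s 1" "rreg Y 4 = rreg s 4"
    using PASS_PATH_PROB_frame(2)[of 1 X] PASS_PATH_PROB_frame(2)[of 4 X] XX(5)[of 1] XX(5)[of 4] U(6)[of 1] U(6)[of 4] by (auto simp: Y_def)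
  have Yb: "nmem Y 1 c = node_kind c" "rmem Y 0 c = node_val c"
    using YY(1,2) XX(1,2) U(1,2) kdc CB c by (auto simp: ctx_def s0_rmem)
  have acc_update: "rreg s' 1 = rreg s 1 + weight c * path_prob (pfx @ root_path c)"
    using SS(3) Yr Yb reach_values weight_leaf[of c] weight_internal[of c] node_kind_cases[of c] by (auto simp: P'_def[symmetric])
  have fx_update: "rreg s' 4 = rreg s 4 + (if k = 0 then weight c * of_bool (sat_path (root_path c) x) else 0)"
  proof -
    have "rreg s' 4 = rreg s 4 + (if node_kind c = 0 \<and> k = 0 then node_val c * I' else 0)" using SS(4) Yr Yb Y0 by (simp add: I'_def[symmetric])
    then show ?thesis using node_kind_cases[of c] weight_leaf weight_internal reach_values by auto
  qed
  have sc: "nreg s' 2 = Suc c" using SS(5) .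
  have O': "pass_pre k pfx s'"
    using O unfolding pass_pre_def ctx_boxes_def ctx_def table_ok_def by (simp add: nm rm nr rr, blast)
  have FR': "frame PASS s1 s'" using frame_PASS_STEP[OF _ fr0] pass_inv by (simp add: pass_inv_def)
  have A1: "\<forall>c'<nreg s' 2. node_kind c' = 1 \<longrightarrow> (\<forall>v. in_interval (nmem s' 14 c') (rmem s' 6 c') (nmem s' 15 c') (rmem s' 7 c') v = sat_feat (node_feat c') (pfx @ root_path c') v) \<and>
        rmem s' 8 c' = feat_prob (node_feat c') (pfx @ root_path c')"
  proof (intro allI impI)
    fix c' assume a: "c' < nreg s' 2" "node_kind c' = 1"
    show "(\<forall>v. in_interval (nmem s' 14 c') (rmem s' 6 c') (nmem s' 15 c') (rmem s' 7 c') v = sat_feat (node_feat c') (pfx @ root_path c') v) \<and>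
        rmem s' 8 c' = feat_prob (node_feat c') (pfx @ root_path c')"
    proof (cases "c' = c")
      case True
      then show ?thesis using merged_box merged_prob a by (simp add: nm rm)
    next
      case False
      then have "c' < c" using a sc by simp
      then show ?thesis using pass_inv a c False by (simp add: nm rm pass_inv_def)
    qed
  qed
  have A2: "\<forall>c'<nreg s' 2. rmem s' 9 c' = path_prob (pfx @ root_path c') \<and> rmem s' 10 c' = of_bool (sat_path (root_path c') x)"
    using pass_inv c sc reach_values by (auto simp: nm rm pass_inv_def less_Suc_eq)
  have A3: "rreg s' 1 = (\<Sum>m<nreg s' 2. weight m * path_prob (pfx @ root_path m))"
    using pass_inv c sc acc_update by (simp add: pass_inv_def)
  have A4: "k = 0 \<longrightarrow> (\<forall>c'<nreg s' 2. node_kind c' = 0 \<longrightarrow> rmem s' 11 c' = path_prob (root_path c')) \<and>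
        rreg s' 4 = rreg s1 4 + (\<Sum>m<nreg s' 2. weight m * of_bool (sat_path (root_path m) x))"
    using pass_inv c sc fx_update reach_values k0 by (auto simp: pass_inv_def rm less_Suc_eq)
  have A5: "k \<noteq> 0 \<longrightarrow> rmem s' 11 = rmem s1 11 \<and> rreg s' 4 = rreg s1 4"
    using pass_inv fx_update by (auto simp: pass_inv_def rm)
  have "pass_inv k pfx s1 s'" unfolding pass_inv_def using O' FR' A1 A2 A3 A4 A5 sc c by simp
  then show ?thesis using run sc c by simp
qed

lemma PASS_INIT_loop_free: "loop_free PASS_INIT" by (simp add: PASS_INIT_def)

definition K_pass :: nat where
  "K_pass = code_size PASS_INIT + (nn * (code_size PASS_STEP + 2) + 2)"

lemma PASS_run:
  assumes "pass_pre k pfx s"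
  shows "runs_within cdf_D PASS s K_pass (\<lambda>s'. pass_inv k pfx s s' \<and> nreg s' 2 = nn)"
proof -
  let ?s1 = "run cdf_D PASS_INIT s"
  have fr: "frame PASS_INIT s ?s1" by (rule run_frame[OF PASS_INIT_loop_free])
  have fr1: "frame PASS s ?s1" using fr unfolding frame_def by (rule same_except_mono) (auto simp: PASS_def)
  have I: "pass_inv k pfx s ?s1" using assms fr1
    unfolding pass_inv_def pass_pre_def ctx_boxes_def ctx_def table_ok_def by (simp add: PASS_INIT_def, blast)
  have W: "runs_within cdf_D (WhileN 2 1 PASS_STEP) ?s1 ((nn - nreg ?s1 2) * (code_size PASS_STEP + 2) + 2) (\<lambda>s'. pass_inv k pfx s s' \<and> \<not> nreg s' 2 < nreg s' 1)"
  proof (rule runs_within_WhileN[where \<mu> = "\<lambda>s. nn - nreg s 2" and I = "pass_inv k pfx s", OF I])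
    fix s' assume "pass_inv k pfx s s'" "nreg s' 2 < nreg s' 1"
    from PASS_STEP_correct[OF this] show "runs_within cdf_D PASS_STEP s' (code_size PASS_STEP) (\<lambda>s''. pass_inv k pfx s s'' \<and> nn - nreg s'' 2 < nn - nreg s' 2)"
      by (intro runs_within_loop_free PASS_STEP_loop_free) auto
  qed
  have E: "runs_within cdf_D PASS s (code_size PASS_INIT + ((nn - nreg ?s1 2) * (code_size PASS_STEP + 2) + 2)) (\<lambda>s'. pass_inv k pfx s s' \<and> \<not> nreg s' 2 < nreg s' 1)"
    unfolding PASS_def by (rule runs_within_loop_free_seq[OF PASS_INIT_loop_free W])
  have z: "nreg ?s1 2 = 0" by (simp add: PASS_INIT_def)
  show ?thesis unfolding K_pass_def
    by (rule runs_within_mono[OF E]) (use z in \<open>auto simp: pass_inv_def pass_pre_def ctx_boxes_def ctx_def\<close>)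
qed

lemma TABLE_WALK_STEP_loop_free: "loop_free TABLE_WALK_STEP" by (simp add: TABLE_WALK_STEP_def IfEq_def NARROW_def)

lemma run_TABLE_WALK_STEP:
  assumes a: "nreg s 0 = 0" "rreg s 11 = 0" "nreg s 10 = 1"
  defines "v \<equiv> nreg s 5 - 1"
  defines "q \<equiv> nmem s 2 v"
  defines "stp \<equiv> (nmem s 11 q = nreg s 11)"
  defines "dr \<equiv> nmem s 8 (nreg s 4)"
  defines "t \<equiv> rmem s 0 v"
  defines "h0 \<equiv> (if stp then nmem s 12 q else 0)"
  defines "hh0 \<equiv> (if stp then nmem s 13 q else 0)"
  shows "nmem (run cdf_D TABLE_WALK_STEP s) = (nmem s)(11 := (nmem s 11)(q := nreg s 11), 12 := (nmem s 12)(q := narrow_hl h0 dr),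
            13 := (nmem s 13)(q := narrow_hh hh0 dr))"
    "rmem (run cdf_D TABLE_WALK_STEP s) = (rmem s)(4 := (rmem s 4)(q := narrow_lo h0 (rmem s 4 q) t dr), 5 := (rmem s 5)(q := narrow_hi hh0 (rmem s 5 q) t dr))"
    "nreg (run cdf_D TABLE_WALK_STEP s) 4 = v" "nreg (run cdf_D TABLE_WALK_STEP s) 5 = nmem s 7 v"
proof -
  show "nmem (run cdf_D TABLE_WALK_STEP s) = (nmem s)(11 := (nmem s 11)(q := nreg s 11), 12 := (nmem s 12)(q := narrow_hl h0 dr),
            13 := (nmem s 13)(q := narrow_hh hh0 dr))"
    unfolding v_def q_def stp_def dr_def t_def h0_def hh0_def
    using a by (cases "nmem s 11 (nmem s 2 (nreg s 5 - 1)) = nreg s 11") (auto simp: TABLE_WALK_STEP_def IfEq_def run_NARROW fun_eq_iff)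
  show "rmem (run cdf_D TABLE_WALK_STEP s) = (rmem s)(4 := (rmem s 4)(q := narrow_lo h0 (rmem s 4 q) t dr), 5 := (rmem s 5)(q := narrow_hi hh0 (rmem s 5 q) t dr))"
    unfolding v_def q_def stp_def dr_def t_def h0_def hh0_def
    using a by (cases "nmem s 11 (nmem s 2 (nreg s 5 - 1)) = nreg s 11") (auto simp: TABLE_WALK_STEP_def IfEq_def run_NARROW fun_eq_iff)
  show "nreg (run cdf_D TABLE_WALK_STEP s) 4 = v" "nreg (run cdf_D TABLE_WALK_STEP s) 5 = nmem s 7 v"
    unfolding v_def using a by (auto simp: TABLE_WALK_STEP_def IfEq_def run_NARROW)
qed

text \<open>Walking up from leaf \<open>l\<close>, the feature table is filled with the intervals imposed by the part of
  the root path of \<open>l\<close> below the current ancestor.\<close>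

definition table_walk_inv :: "nat \<Rightarrow> nat \<Rightarrow> mstate \<Rightarrow> constr list \<Rightarrow> mstate \<Rightarrow> bool" where
  "table_walk_inv k l sA suf s \<longleftrightarrow> ctx_boxes s \<and> frame (WhileN 0 5 TABLE_WALK_STEP) sA s \<and> nreg s 3 = k \<and> nreg s 11 = Suc k \<and>
     nreg s 4 < nn \<and> nreg s 5 = PAR (nreg s 4) \<and> root_path l = root_path (nreg s 4) @ suf \<and>
     (\<forall>q. nmem s 11 q \<le> Suc k) \<and> table_ok k suf s"

lemma TABLE_WALK_STEP_correct:
  assumes table_walk_inv: "table_walk_inv k l sA suf s" and pos: "0 < nreg s 5"
  shows "\<exists>suf'. table_walk_inv k l sA suf' (run cdf_D TABLE_WALK_STEP s) \<and> length (root_path (nreg (run cdf_D TABLE_WALK_STEP s) 4)) < length (root_path (nreg s 4))"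
proof -
  have C3: "ctx_boxes s" and CB: "ctx s" using table_walk_inv by (auto simp: table_walk_inv_def ctx_boxes_def)
  obtain cur where cur: "nreg s 4 = cur" "cur < nn" using table_walk_inv by (auto simp: table_walk_inv_def)
  have pr: "nreg s 5 = PAR cur" using table_walk_inv cur by (simp add: table_walk_inv_def)
  obtain v where pv: "node_parent cur = Some v" using PAR_pos[OF cur(2)] pos pr by auto
  then have PV: "PAR cur = Suc v" using PAR_Some[OF cur(2)] by simp
  have nv: "v < cur" "node_kind v = 1" "root_path cur = root_path v @ [(node_feat v, node_val v, node_is_left cur)]" using node_parent_cases(2)[OF cur(2) pv] by auto
  have vn: "v < nn" using nv cur by simp
  have fv: "node_feat v \<in> {1..d}" using node_feats(2)[OF vn nv(2)] .
  have dr: "(0 < DIR cur) = node_is_left cur" using DIR_Some[OF cur(2) pv] .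
  define s' where "s' = run cdf_D TABLE_WALK_STEP s"
  define q where "q = node_feat v"
  define stp where "stp = (nmem s 11 q = Suc k)"
  define h0 where "h0 = (if stp then nmem s 12 q else 0)"
  define hh0 where "hh0 = (if stp then nmem s 13 q else 0)"
  have a: "nreg s 0 = 0" "rreg s 11 = 0" "nreg s 10 = 1" using CB by (auto simp: ctx_def)
  have k1: "nreg s 11 = Suc k" using table_walk_inv by (simp add: table_walk_inv_def)
  have b2: "nmem s 2 v = node_feat v" "nmem s 8 cur = DIR cur" "rmem s 0 v = node_val v" "nmem s 7 v = PAR v"
    using CB C3 vn cur by (auto simp: ctx_def ctx_boxes_def s0_nmem s0_rmem)
  note R = run_TABLE_WALK_STEP[OF a, folded s'_def]
  have nm: "nmem s' = (nmem s)(11 := (nmem s 11)(q := Suc k), 12 := (nmem s 12)(q := narrow_hl h0 (DIR cur)),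
            13 := (nmem s 13)(q := narrow_hh hh0 (DIR cur)))"
    using R(1) pr PV b2 cur k1 unfolding q_def h0_def hh0_def stp_def by simp
  have rm: "rmem s' = (rmem s)(4 := (rmem s 4)(q := narrow_lo h0 (rmem s 4 q) (node_val v) (DIR cur)),
       5 := (rmem s 5)(q := narrow_hi hh0 (rmem s 5 q) (node_val v) (DIR cur)))"
    using R(2) pr PV b2 cur k1 unfolding q_def h0_def hh0_def stp_def by simp
  have n45: "nreg s' 4 = v" "nreg s' 5 = PAR v" using R(3,4) pr PV b2 by simp_all
  have fr0: "frame TABLE_WALK_STEP s s'" unfolding s'_def by (rule run_frame[OF TABLE_WALK_STEP_loop_free])
  have fr: "same_except {6,7,8,13,14,17,4,5} {6,7,8} {11,12,13} {4,5} s s'"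
    using fr0 unfolding frame_def by (rule same_except_mono) (auto simp: TABLE_WALK_STEP_def IfEq_def NARROW_def)
  have nr: "\<And>r. r \<notin> {6,7,8,13,14,17,4,5} \<Longrightarrow> nreg s' r = nreg s r" using fr by (simp add: same_except_def)
  have rr: "\<And>r. r \<notin> {6,7,8} \<Longrightarrow> rreg s' r = rreg s r" using fr by (simp add: same_except_def)
  have FR': "frame (WhileN 0 5 TABLE_WALK_STEP) sA s'"
    using table_walk_inv fr0 same_except_trans unfolding table_walk_inv_def frame_def by fastforce
  let ?suf' = "(node_feat v, node_val v, node_is_left cur) # suf"
  have Gv: "table_ok k suf s" using table_walk_inv by (simp add: table_walk_inv_def)
  have Gv': "table_ok k ?suf' s'"
    unfolding table_ok_def
  proof
    fix q' assume q': "q' \<in> {1..d}"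
    show "(nmem s' 11 q' = Suc k \<longrightarrow> (\<forall>y. in_interval (nmem s' 12 q') (rmem s' 4 q') (nmem s' 13 q') (rmem s' 5 q') y = sat_feat q' ?suf' y)) \<and>
          (nmem s' 11 q' \<noteq> Suc k \<longrightarrow> (\<forall>y. sat_feat q' ?suf' y))"
    proof (cases "q' = q")
      case True
      have base: "in_interval h0 (rmem s 4 q) hh0 (rmem s 5 q) y = sat_feat q suf y" for y
      proof (cases stp)
        case True
        then show ?thesis using Gv fv unfolding table_ok_def h0_def hh0_def stp_def q_def by auto
      next
        case False
        then show ?thesis using Gv fv unfolding table_ok_def h0_def hh0_def stp_def q_def by (auto simp: in_interval_def)
      qed
      show ?thesis using True base dr by (auto simp: nm rm in_interval_narrow q_def)
    next
      case False
      then have "node_feat v \<noteq> q'" by (simp add: q_def)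
      then show ?thesis using Gv q' False unfolding table_ok_def by (simp add: nm rm)
    qed
  qed
  have IG': "table_walk_inv k l sA ?suf' s'"
    unfolding table_walk_inv_def using table_walk_inv C3 FR' Gv' n45 nv vn cur
    by (auto simp: table_walk_inv_def ctx_boxes_def ctx_def nm rm nr rr)
  show ?thesis using IG' n45 nv cur unfolding s'_def by auto
qed

lemma frame_table_walk: "frame (WhileN 0 5 TABLE_WALK_STEP) s s' \<Longrightarrow> same_except {6,7,8,13,14,17,4,5} {6,7,8} {11,12,13} {4,5} s s'"
  unfolding frame_def by (rule same_except_mono) (auto simp: TABLE_WALK_STEP_def IfEq_def NARROW_def)

lemma frame_PASS: "frame PASS s s' \<Longrightarrow> same_except {2,5,7,8,9,12,13,14,17} {1,4,6,7,8,9,12,13,14,15,17,18,19,20} {14,15} {6,7,8,9,10,11} s s'"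
  unfolding frame_def by (rule same_except_mono)
    (auto simp: PASS_def PASS_INIT_def PASS_STEP_def PASS_UPDATE_def PASS_BOX_def PASS_FEAT_PROB_def PASS_PATH_PROB_def PASS_ACCUMULATE_def BOX_MERGE_def FEAT_PROB_def CHILD_PROB_def NARROW_def ROOT_PROB_def ACCUMULATE_def IfEq_def)

definition moments_stored :: "mstate \<Rightarrow> bool" where
  "moments_stored s \<longleftrightarrow> (\<forall>c<nn. node_kind c = 0 \<longrightarrow> rmem s 11 c = path_prob (root_path c)) \<and> rreg s 3 = moment1 \<and> rreg s 4 = f_x"

definition moment2_upto :: "nat \<Rightarrow> real" where
  "moment2_upto j = (\<Sum>l<j. weight l * (\<Sum>m<nn. weight m * path_prob (root_path l @ root_path m)))"

definition outer_step_post :: "nat \<Rightarrow> mstate \<Rightarrow> bool" where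
  "outer_step_post k s \<longleftrightarrow> ctx_boxes s \<and> nreg s 3 = k \<and> (\<forall>q. nmem s 11 q \<le> Suc k) \<and> moments_stored s \<and> rreg s 2 = moment2_upto k"

definition K_leaf :: nat where
  "K_leaf = code_size LEAF_INIT + ((nn * (code_size TABLE_WALK_STEP + 2) + 2) + (K_pass + code_size LEAF_STORE))"

lemma LEAF_INIT_loop_free: "loop_free LEAF_INIT" by (simp add: LEAF_INIT_def)
lemma LEAF_STORE_loop_free: "loop_free LEAF_STORE" by (simp add: LEAF_STORE_def)

lemma LEAF_PASS_run:
  assumes C3: "ctx_boxes s" and k: "nreg s 3 = k" "0 < k" "k \<le> nn" and stk: "nreg s 11 = Suc k" and km: "nreg s 15 = k - 1"
    and loop_free: "node_kind (k - 1) = 0" and st: "\<forall>q. nmem s 11 q \<le> k" and pv: "moments_stored s" and qs: "rreg s 2 = moment2_upto (k - 1)"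
  shows "runs_within cdf_D LEAF_PASS s K_leaf (outer_step_post k)"
proof -
  define l where "l = k - 1"
  have ln: "l < nn" using k by (simp add: l_def)
  have CB: "ctx s" using C3 by (simp add: ctx_boxes_def)
  define sA where "sA = run cdf_D LEAF_INIT s"
  have A: "nreg sA 4 = l" "nreg sA 5 = PAR l" "rreg sA 5 = path_prob (root_path l)"
    using CB C3 km pv loop_free ln unfolding sA_def l_def by (auto simp: LEAF_INIT_def ctx_def ctx_boxes_def moments_stored_def)
  have frA: "frame LEAF_INIT s sA" unfolding sA_def by (rule run_frame[OF LEAF_INIT_loop_free])
  have frA': "same_except {4,5} {5} {} {} s sA" using frA unfolding frame_def by (rule same_except_mono) (auto simp: LEAF_INIT_def)
  have nA: "nmem sA 11 = nmem s 11" using frA' by (simp add: same_except_def)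
  have stA: "nmem sA 11 q \<le> k" "nmem sA 11 q \<noteq> Suc k" "nmem sA 11 q \<le> Suc k" for q
  proof -
    show "nmem sA 11 q \<le> k" using st nA by simp
    then show "nmem sA 11 q \<noteq> Suc k" "nmem sA 11 q \<le> Suc k" by simp_all
  qed
  have IG0: "table_walk_inv k l sA [] sA"
    unfolding table_walk_inv_def table_ok_def using C3 frA' A k stk stA ln
    by (auto simp: same_except_refl frame_def ctx_boxes_def ctx_def same_except_def)
  have W: "runs_within cdf_D (WhileN 0 5 TABLE_WALK_STEP) sA (length (root_path (nreg sA 4)) * (code_size TABLE_WALK_STEP + 2) + 2)
      (\<lambda>s'. (\<exists>suf. table_walk_inv k l sA suf s') \<and> \<not> nreg s' 0 < nreg s' 5)"
  proof (rule runs_within_WhileN[where \<mu> = "\<lambda>s. length (root_path (nreg s 4))" and I = "\<lambda>s. \<exists>suf. table_walk_inv k l sA suf s"])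
    show "\<exists>suf. table_walk_inv k l sA suf sA" using IG0 by blast
    fix s assume "\<exists>suf. table_walk_inv k l sA suf s" "nreg s 0 < nreg s 5"
    then obtain suf where "table_walk_inv k l sA suf s" "0 < nreg s 5" by (auto simp: table_walk_inv_def ctx_boxes_def ctx_def)
    from TABLE_WALK_STEP_correct[OF this] show "runs_within cdf_D TABLE_WALK_STEP s (code_size TABLE_WALK_STEP) (\<lambda>s'. (\<exists>suf. table_walk_inv k l sA suf s') \<and> length (root_path (nreg s' 4)) < length (root_path (nreg s 4)))"
      by (intro runs_within_loop_free TABLE_WALK_STEP_loop_free) blast
  qed
  have W2: "runs_within cdf_D (WhileN 0 5 TABLE_WALK_STEP ;; (PASS ;; LEAF_STORE)) sA ((length (root_path (nreg sA 4)) * (code_size TABLE_WALK_STEP + 2) + 2) + (K_pass + code_size LEAF_STORE)) (outer_step_post k)"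
  proof (rule runs_within_seq[OF W])
    fix sB assume "(\<exists>suf. table_walk_inv k l sA suf sB) \<and> \<not> nreg sB 0 < nreg sB 5"
    then obtain suf where table_walk_inv: "table_walk_inv k l sA suf sB" and pr0: "\<not> nreg sB 0 < nreg sB 5" by blast
    have CBB: "ctx sB" using table_walk_inv by (auto simp: table_walk_inv_def ctx_boxes_def)
    obtain cur where cur: "nreg sB 4 = cur" "cur < nn" using table_walk_inv by (auto simp: table_walk_inv_def)
    have "PAR cur = 0" using table_walk_inv pr0 cur CBB by (simp add: table_walk_inv_def ctx_def)
    then have "node_parent cur = None" using PAR_Some[OF cur(2)] by (cases "node_parent cur") auto
    then have "root_path cur = []" using node_parent_cases(1)[OF cur(2)] by simp
    then have suf: "suf = root_path l" using table_walk_inv cur by (simp add: table_walk_inv_def)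
    have frB: "same_except {6,7,8,13,14,17,4,5} {6,7,8} {11,12,13} {4,5} sA sB" by (rule frame_table_walk) (use table_walk_inv in \<open>simp add: table_walk_inv_def\<close>)
    have pbB: "rreg sB 5 = path_prob (root_path l)" using frB A by (simp add: same_except_def)
    have OIPB: "pass_pre k (root_path l) sB"
      using table_walk_inv suf pbB node_feats(1)[OF ln] k unfolding pass_pre_def table_walk_inv_def by auto
    show "runs_within cdf_D (PASS ;; LEAF_STORE) sB (K_pass + code_size LEAF_STORE) (outer_step_post k)"
    proof (rule runs_within_seq_loop_free[OF PASS_run[OF OIPB] LEAF_STORE_loop_free])
      fix sC assume a: "pass_inv k (root_path l) sB sC \<and> nreg sC 2 = nn"
      have frC: "same_except {2,5,7,8,9,12,13,14,17} {1,4,6,7,8,9,12,13,14,15,17,18,19,20} {14,15} {6,7,8,9,10,11} sB sC"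
        by (rule frame_PASS) (use a in \<open>simp add: pass_inv_def\<close>)
      have OC: "pass_pre k (root_path l) sC" using a by (simp add: pass_inv_def)
      have CBC: "ctx sC" using OC by (simp add: pass_pre_def ctx_boxes_def)
      have accC: "rreg sC 1 = (\<Sum>m<nn. weight m * path_prob (root_path l @ root_path m))" using a by (simp add: pass_inv_def)
      have pvC: "rmem sC 11 = rmem sB 11 \<and> rreg sC 4 = rreg sB 4" using a k by (simp add: pass_inv_def)
      have stC: "\<forall>q. nmem sC 11 q \<le> Suc k" using table_walk_inv frC by (simp add: table_walk_inv_def same_except_def)
      have regs: "rreg sC 2 = rreg s 2" "rreg sC 3 = rreg s 3" "rreg sC 4 = rreg s 4" "rmem sC 11 = rmem s 11"
        using frC frB frA' pvC by (auto simp: same_except_def)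
      have node_val: "rmem sC 0 l = weight l" using CBC ln loop_free weight_leaf[of l] by (simp add: ctx_def s0_rmem l_def)
      have kl: "nreg sC 15 = l" using frC frB frA' km by (simp add: same_except_def l_def)
      have kS: "k = Suc l" using k by (simp add: l_def)
      have qsk: "moment2_upto k = moment2_upto l + weight l * (\<Sum>m<nn. weight m * path_prob (root_path l @ root_path m))"
        unfolding kS moment2_upto_def by simp
      show "outer_step_post k (run cdf_D LEAF_STORE sC)"
        using OC stC regs pv qs node_val kl accC qsk
        unfolding outer_step_post_def pass_pre_def ctx_boxes_def ctx_def moments_stored_def
        by (simp add: LEAF_STORE_def l_def)
    qed
  qed
  have E: "runs_within cdf_D LEAF_PASS s (code_size LEAF_INIT + ((length (root_path (nreg sA 4)) * (code_size TABLE_WALK_STEP + 2) + 2) + (K_pass + code_size LEAF_STORE))) (outer_step_post k)"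
    unfolding LEAF_PASS_def using runs_within_loop_free_seq[OF LEAF_INIT_loop_free W2[unfolded sA_def]] by (simp add: sA_def)
  have L: "length (root_path (nreg sA 4)) * (code_size TABLE_WALK_STEP + 2) \<le> nn * (code_size TABLE_WALK_STEP + 2)"
    using A length_root_path[OF ln] ln by (intro mult_right_mono) auto
  show ?thesis unfolding K_leaf_def by (rule runs_within_mono[OF E]) (use L in auto)
qed

definition K_first :: nat where
  "K_first = 1 + (K_pass + 1)"

lemma FIRST_PASS_run:
  assumes C3: "ctx_boxes s" and k: "nreg s 3 = 0" and stk: "nreg s 11 = 1" and st: "\<forall>q. nmem s 11 q \<le> 0"
    and fx: "rreg s 4 = 0" and qs: "rreg s 2 = moment2_upto 0"
  shows "runs_within cdf_D FIRST_PASS s K_first (outer_step_post 0)"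
proof -
  define sB where "sB = run cdf_D (Ins (RConst 5 1)) s"
  have st0: "nmem s 11 q = 0" for q using st by simp
  have OUTER_STEP: "pass_pre 0 [] sB" using C3 k stk st0 unfolding sB_def pass_pre_def ctx_boxes_def ctx_def table_ok_def
    by (simp add: path_prob_Nil, auto)
  have E: "runs_within cdf_D (PASS ;; Ins (RAdd 3 1 11)) sB (K_pass + code_size (Ins (RAdd 3 1 11))) (outer_step_post 0)"
  proof (rule runs_within_seq_loop_free[OF PASS_run[OF OUTER_STEP]])
    show "loop_free (Ins (RAdd 3 1 11))" by simp
    fix sC assume a: "pass_inv 0 [] sB sC \<and> nreg sC 2 = nn"
    have frC: "same_except {2,5,7,8,9,12,13,14,17} {1,4,6,7,8,9,12,13,14,15,17,18,19,20} {14,15} {6,7,8,9,10,11} sB sC"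
      by (rule frame_PASS) (use a in \<open>simp add: pass_inv_def\<close>)
    have OC: "pass_pre 0 [] sC" using a by (simp add: pass_inv_def)
    have ILC: "(\<forall>c<nn. node_kind c = 0 \<longrightarrow> rmem sC 11 c = path_prob (root_path c)) \<and> rreg sC 4 = rreg sB 4 + (\<Sum>m<nn. weight m * of_bool (sat_path (root_path m) x))"
       "rreg sC 1 = (\<Sum>m<nn. weight m * path_prob ([] @ root_path m))" using a by (auto simp: pass_inv_def)
    have regs: "rreg sC 2 = rreg s 2" "rreg sB 4 = rreg s 4" "nmem sC 11 = nmem s 11"
      using frC by (auto simp: same_except_def sB_def)
    show "outer_step_post 0 (run cdf_D (Ins (RAdd 3 1 11)) sC)"
      using OC ILC regs fx qs st0 unfolding outer_step_post_def pass_pre_def ctx_boxes_def ctx_def moments_stored_def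
      by (simp add: moment1_def f_x_def)
  qed
  have "runs_within cdf_D FIRST_PASS s (1 + (K_pass + 1)) (outer_step_post 0)"
    unfolding FIRST_PASS_def using runs_within_loop_free_seq[of "Ins (RConst 5 1)" cdf_D "PASS ;; Ins (RAdd 3 1 11)" s] E
    by (simp add: sB_def)
  then show ?thesis by (simp add: K_first_def)
qed

definition inv_outer :: "mstate \<Rightarrow> bool" where
  "inv_outer s \<longleftrightarrow> ctx_boxes s \<and> nreg s 3 \<le> Suc nn \<and> (\<forall>q. nmem s 11 q \<le> nreg s 3) \<and> (0 < nreg s 3 \<longrightarrow> moments_stored s) \<and>
     (nreg s 3 = 0 \<longrightarrow> rreg s 4 = 0) \<and> rreg s 2 = moment2_upto (nreg s 3 - 1)"

lemma OUTER_INIT_loop_free: "loop_free OUTER_INIT" by (simp add: OUTER_INIT_def)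

definition K_outer :: nat where
  "K_outer = 1 + ((code_size OUTER_INIT + (K_leaf + 2) + K_first + 2) + 1)"

lemma OUTER_STEP_run:
  assumes I: "inv_outer s" and lt: "nreg s 3 < nreg s 16"
  shows "runs_within cdf_D OUTER_STEP s K_outer (\<lambda>s'. inv_outer s' \<and> Suc nn - nreg s' 3 < Suc nn - nreg s 3)"
proof -
  have C3: "ctx_boxes s" and CB: "ctx s" using I by (auto simp: inv_outer_def ctx_boxes_def)
  obtain k where k: "nreg s 3 = k" "k < Suc nn" using lt CB by (auto simp: ctx_def)
  define sa where "sa = run cdf_D (Ins (NAdd 11 3 10)) s"
  have Ca: "ctx_boxes sa" "nreg sa 3 = k" "nreg sa 11 = Suc k" "nmem sa 11 = nmem s 11" "rreg sa = rreg s" "rmem sa = rmem s"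
    using C3 k unfolding sa_def ctx_boxes_def ctx_def by auto
  have mid: "runs_within cdf_D (IfN 0 3 OUTER_NODE FIRST_PASS) sa (code_size OUTER_INIT + (K_leaf + 2) + K_first + 2) (outer_step_post k)"
  proof (rule runs_within_IfN)
    assume pos: "nreg sa 0 < nreg sa 3"
    then have k0: "0 < k" using Ca CB by (simp add: ctx_boxes_def ctx_def)
    define sb where "sb = run cdf_D OUTER_INIT sa"
    have Cb: "ctx_boxes sb" "nreg sb 3 = k" "nreg sb 11 = Suc k" "nmem sb 11 = nmem s 11" "rreg sb = rreg s" "rmem sb = rmem s"
      "nreg sb 15 = k - 1" "nreg sb 8 = node_kind (k - 1)"
      using Ca k k0 unfolding sb_def ctx_boxes_def ctx_def by (auto simp: OUTER_INIT_def s0_nmem)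
    have pv: "moments_stored sb" using I k k0 Cb unfolding inv_outer_def moments_stored_def by simp
    have qs: "rreg sb 2 = moment2_upto (k - 1)" using I k Cb by (simp add: inv_outer_def)
    have st: "\<forall>q. nmem sb 11 q \<le> k" using I k Cb by (simp add: inv_outer_def)
    have "runs_within cdf_D (IfN 0 8 SKIP LEAF_PASS) sb (K_leaf + 2) (outer_step_post k)"
    proof (rule runs_within_IfN)
      assume "nreg sb 0 < nreg sb 8"
      then have "0 < node_kind (k - 1)" using Cb by (simp add: ctx_boxes_def ctx_def)
      then have ki: "node_kind (k - 1) = 1" using node_kind_cases by (metis less_numeral_extra(3))
      have kS: "k = Suc (k - 1)" using k0 by simp
      have "moment2_upto k = moment2_upto (k - 1)" using weight_internal[OF ki] by (subst kS, simp add: moment2_upto_def)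
      then have M: "outer_step_post k sb" using Cb pv qs st unfolding outer_step_post_def by (auto intro: le_SucI)
      have "runs_within cdf_D SKIP sb 0 (outer_step_post k)" using runs_within_loop_free[of SKIP "outer_step_post k" cdf_D sb] M by simp
      then show "runs_within cdf_D SKIP sb K_leaf (outer_step_post k)" by (rule runs_within_mono) auto
    next
      assume "\<not> nreg sb 0 < nreg sb 8"
      then have loop_free: "node_kind (k - 1) = 0" using Cb by (simp add: ctx_boxes_def ctx_def)
      show "runs_within cdf_D LEAF_PASS sb K_leaf (outer_step_post k)"
        by (rule LEAF_PASS_run[OF Cb(1) Cb(2) k0 _ Cb(3) Cb(7) loop_free st pv qs]) (use k k0 in auto)
    qed
    then have "runs_within cdf_D OUTER_NODE sa (code_size OUTER_INIT + (K_leaf + 2)) (outer_step_post k)"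
      unfolding OUTER_NODE_def sb_def by (rule runs_within_loop_free_seq[OF OUTER_INIT_loop_free])
    then show "runs_within cdf_D OUTER_NODE sa (code_size OUTER_INIT + (K_leaf + 2) + K_first) (outer_step_post k)" by (rule runs_within_mono) auto
  next
    assume "\<not> nreg sa 0 < nreg sa 3"
    then have k0: "k = 0" using Ca CB by (simp add: ctx_boxes_def ctx_def)
    have Z: "runs_within cdf_D FIRST_PASS sa K_first (outer_step_post 0)"
      by (rule FIRST_PASS_run) (use Ca I k k0 in \<open>auto simp: inv_outer_def\<close>)
    show "runs_within cdf_D FIRST_PASS sa (code_size OUTER_INIT + (K_leaf + 2) + K_first) (outer_step_post k)" by (rule runs_within_mono[OF Z]) (use k0 in auto)
  qed
  have E: "runs_within cdf_D (IfN 0 3 OUTER_NODE FIRST_PASS ;; Ins (NAdd 3 3 10)) sa ((code_size OUTER_INIT + (K_leaf + 2) + K_first + 2) + code_size (Ins (NAdd 3 3 10)))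
      (\<lambda>s'. inv_outer s' \<and> Suc nn - nreg s' 3 < Suc nn - nreg s 3)"
  proof (rule runs_within_seq_loop_free[OF mid])
    show "loop_free (Ins (NAdd 3 3 10))" by simp
    fix s1 assume M: "outer_step_post k s1"
    then show "inv_outer (run cdf_D (Ins (NAdd 3 3 10)) s1) \<and> Suc nn - nreg (run cdf_D (Ins (NAdd 3 3 10)) s1) 3 < Suc nn - nreg s 3"
      using k unfolding outer_step_post_def inv_outer_def ctx_boxes_def ctx_def moments_stored_def by auto
  qed
  have "runs_within cdf_D OUTER_STEP s (code_size (Ins (NAdd 11 3 10)) + ((code_size OUTER_INIT + (K_leaf + 2) + K_first + 2) + code_size (Ins (NAdd 3 3 10))))
      (\<lambda>s'. inv_outer s' \<and> Suc nn - nreg s' 3 < Suc nn - nreg s 3)"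
    unfolding OUTER_STEP_def by (rule runs_within_loop_free_seq[OF _ E[unfolded sa_def]]) simp
  then show ?thesis unfolding K_outer_def by simp
qed

lemma OUTER_run:
  assumes "inv_boxes s" "nreg s 2 = nn"
  shows "runs_within cdf_D OUTER s (1 + (Suc nn * (K_outer + 2) + 2)) (\<lambda>s'. inv_outer s' \<and> nreg s' 3 = Suc nn)"
proof -
  let ?s1 = "run cdf_D (Ins (NConst 3 0)) s"
  have I: "inv_outer ?s1" using assms by (simp add: inv_boxes_def inv_outer_def ctx_boxes_def ctx_def moment2_upto_def)
  have W: "runs_within cdf_D (WhileN 3 16 OUTER_STEP) ?s1 ((Suc nn - nreg ?s1 3) * (K_outer + 2) + 2) (\<lambda>s'. inv_outer s' \<and> \<not> nreg s' 3 < nreg s' 16)"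
    by (rule runs_within_WhileN[where \<mu> = "\<lambda>s. Suc nn - nreg s 3" and I = inv_outer, OF I]) (rule OUTER_STEP_run)
  have E: "runs_within cdf_D OUTER s (code_size (Ins (NConst 3 0)) + ((Suc nn - nreg ?s1 3) * (K_outer + 2) + 2)) (\<lambda>s'. inv_outer s' \<and> \<not> nreg s' 3 < nreg s' 16)"
    unfolding OUTER_def using runs_within_loop_free_seq[OF _ W] by simp
  show ?thesis by (rule runs_within_mono[OF E]) (auto simp: inv_outer_def ctx_boxes_def ctx_def)
qed

lemma FINISH_correct:
  assumes "inv_outer s" "nreg s 3 = Suc nn"
  shows "rreg (run cdf_D FINISH s) 0 = PG2 ts x S D"
proof -
  have "rreg s 2 = moment2" "rreg s 3 = moment1" "rreg s 4 = f_x" using assms by (auto simp: inv_outer_def moments_stored_def moment2_upto_def moment2_def)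
  then show ?thesis by (simp add: FINISH_def PG2_eq_moments power2_eq_square)
qed

definition K_total :: nat where
  "K_total = code_size INIT + ((1 + (nn * (code_size PARENT_STEP + 2) + 2)) + ((1 + (nn * (K_box + 2) + 2)) + ((1 + (Suc nn * (K_outer + 2) + 2)) + code_size FINISH)))"

lemma INIT_loop_free: "loop_free INIT" by (simp add: INIT_def)
lemma FINISH_loop_free: "loop_free FINISH" by (simp add: FINISH_def)

lemma PROG_run: "runs_within cdf_D PROG s0 K_total (\<lambda>s'. rreg s' 0 = PG2 ts x S D)"
proof -
  have P3: "runs_within cdf_D (OUTER ;; FINISH) s (1 + (Suc nn * (K_outer + 2) + 2) + code_size FINISH) (\<lambda>s'. rreg s' 0 = PG2 ts x S D)"
    if "inv_boxes s" "nreg s 2 = nn" for s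
    by (rule runs_within_seq_loop_free[OF OUTER_run[OF that] FINISH_loop_free]) (auto intro: FINISH_correct)
  have P2: "runs_within cdf_D (BOXES ;; (OUTER ;; FINISH)) s ((1 + (nn * (K_box + 2) + 2)) + (1 + (Suc nn * (K_outer + 2) + 2) + code_size FINISH)) (\<lambda>s'. rreg s' 0 = PG2 ts x S D)"
    if "inv_parents s" "nreg s 2 = nn" for s
    by (rule runs_within_seq[OF BOXES_run[OF that]]) (use P3 in blast)
  have P1: "runs_within cdf_D (PARENTS ;; (BOXES ;; (OUTER ;; FINISH))) s ((1 + (nn * (code_size PARENT_STEP + 2) + 2)) + ((1 + (nn * (K_box + 2) + 2)) + (1 + (Suc nn * (K_outer + 2) + 2) + code_size FINISH))) (\<lambda>s'. rreg s' 0 = PG2 ts x S D)"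
    if "ctx s" "nmem s 7 = (\<lambda>_. 0)" "nmem s 8 = (\<lambda>_. 0)" "nmem s 11 = (\<lambda>_. 0)" "rreg s 2 = 0" "rreg s 4 = 0" for s
    by (rule runs_within_seq[OF PARENTS_run[OF that]]) (use P2 in blast)
  have "runs_within cdf_D PROG s0 (code_size INIT + ((1 + (nn * (code_size PARENT_STEP + 2) + 2)) + ((1 + (nn * (K_box + 2) + 2)) + (1 + (Suc nn * (K_outer + 2) + 2) + code_size FINISH)))) (\<lambda>s'. rreg s' 0 = PG2 ts x S D)"
    unfolding PROG_def by (rule runs_within_loop_free_seq[OF INIT_loop_free P1]) (use run_INIT in auto)
  then show ?thesis unfolding K_total_def by (simp add: add.assoc)
qed

end

lemma loop_cost_quadratic:
  assumes "K \<le> \<alpha> * Suc n"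
  shows "Suc n * (K + 2) \<le> (\<alpha> + 2) * (Suc n * Suc (n::nat))"
proof -
  have "Suc n * (K + 2) \<le> Suc n * (\<alpha> * Suc n + 2)" using assms by (intro mult_le_mono2) simp
  also have "\<dots> \<le> Suc n * ((\<alpha> + 2) * Suc n)" by (intro mult_le_mono2) (simp add: algebra_simps)
  finally show ?thesis by (simp add: algebra_simps)
qed

definition c_pass :: nat where "c_pass = code_size PASS_INIT + code_size PASS_STEP + 4"
definition c_box :: nat where "c_box = code_size BOX_INIT + code_size BOX_STORE + code_size BOX_WALK_STEP + 4"
definition c_leaf :: nat where "c_leaf = code_size LEAF_INIT + code_size LEAF_STORE + code_size TABLE_WALK_STEP + 4 + c_pass"
definition c_outer :: nat where "c_outer = code_size OUTER_INIT + c_leaf + c_pass + 2 + 6"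
definition step_const :: nat where "step_const = code_size INIT + (code_size PARENT_STEP + 2) + (c_box + 2) + (c_outer + 2) + code_size FINISH + 20"

context pg_setting
begin

lemma K_total_bound: "K_total \<le> step_const * (Suc nn * Suc nn)"
proof -
  let ?N = "Suc nn"
  have b2: "K_box \<le> c_box * ?N" unfolding K_box_def c_box_def by (simp add: algebra_simps)
  have bI: "K_pass \<le> c_pass * ?N" unfolding K_pass_def c_pass_def by (simp add: algebra_simps)
  have bL: "K_leaf \<le> c_leaf * ?N"
  proof -
    have "K_leaf = code_size LEAF_INIT + (nn * (code_size TABLE_WALK_STEP + 2) + 2) + (code_size LEAF_STORE + K_pass)" by (simp add: K_leaf_def)
    also have "\<dots> \<le> (code_size TABLE_WALK_STEP + code_size LEAF_INIT + code_size LEAF_STORE + 4) * ?N + c_pass * ?N"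
    proof -
      have "code_size LEAF_INIT + (nn * (code_size TABLE_WALK_STEP + 2) + 2) + code_size LEAF_STORE \<le> (code_size TABLE_WALK_STEP + code_size LEAF_INIT + code_size LEAF_STORE + 4) * ?N"
        by (simp add: algebra_simps)
      then show ?thesis using bI by linarith
    qed
    finally show ?thesis by (simp add: c_leaf_def algebra_simps)
  qed
  have bO: "K_outer \<le> c_outer * ?N"
  proof -
    have "K_outer = code_size OUTER_INIT + K_leaf + K_pass + 8" by (simp add: K_outer_def K_first_def)
    also have "\<dots> \<le> code_size OUTER_INIT * ?N + c_leaf * ?N + c_pass * ?N + 8 * ?N"
      using bL bI by (intro add_mono) (auto simp: algebra_simps)
    finally show ?thesis by (simp add: c_outer_def algebra_simps)
  qed
  have q1: "nn * (code_size PARENT_STEP + 2) \<le> (code_size PARENT_STEP + 2) * (?N * ?N)"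
  proof -
    have "nn * (code_size PARENT_STEP + 2) \<le> ?N * (code_size PARENT_STEP + 2)" by simp
    also have "\<dots> \<le> (?N * ?N) * (code_size PARENT_STEP + 2)" by (intro mult_le_mono1) simp
    finally show ?thesis by (simp add: mult.commute)
  qed
  have "nn * (K_box + 2) \<le> ?N * (K_box + 2)" by simp
  then have q2: "nn * (K_box + 2) \<le> (c_box + 2) * (?N * ?N)" using loop_cost_quadratic[OF b2] by linarith
  have q3: "?N * (K_outer + 2) \<le> (c_outer + 2) * (?N * ?N)" using loop_cost_quadratic[OF bO] .
  have one: "1 \<le> ?N * ?N" by simp
  have c1: "code_size INIT \<le> code_size INIT * (?N * ?N)" "code_size FINISH \<le> code_size FINISH * (?N * ?N)" by simp_all
  have "K_total \<le> code_size INIT * (?N * ?N) + (code_size PARENT_STEP + 2) * (?N * ?N) + (c_box + 2) * (?N * ?N) + (c_outer + 2) * (?N * ?N)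
             + code_size FINISH * (?N * ?N) + 20 * (?N * ?N)"
    unfolding K_total_def using q1 q2 q3 one c1 by linarith
  also have "\<dots> = step_const * (?N * ?N)" by (simp add: step_const_def algebra_simps)
  finally show ?thesis .
qed

lemma PROG_correct:
  "let s = (step (compile 0 PROG @ [Halt]) (cdf_oracle D) ^^ (step_const * (ens_size ts + 1)\<^sup>2)) (init_state d ts x S)
   in halted (compile 0 PROG @ [Halt]) s \<and> rreg s 0 = PG2 ts x S D"
proof -
  obtain k s' where run: "big_step cdf_D PROG s0 k s'" "k \<le> K_total" "rreg s' 0 = PG2 ts x S D"
    using PROG_run unfolding runs_within_def by blast
  have "k \<le> step_const * (nn + 1)\<^sup>2"
    using run(2) K_total_bound by (simp add: power2_eq_square)
  note halts = compiled_program_halts[OF run(1) s0_basic(3) this]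
  have "init_state d ts x S = s0"
    by (simp only: s0_def)
  then show ?thesis
    unfolding Let_def using halts run(3) by simp
qed

end

theorem theorem3p1:
  "\<exists>(P :: instr list) (c :: nat).
     \<forall>(d :: nat) (ts :: dtree list) (x :: nat \<Rightarrow> real) (S :: nat set) (D :: nat \<Rightarrow> real measure).
       wf_ensemble d ts \<and> S \<subseteq> {1..d} \<and>
       (\<forall>i\<in>S. prob_space (D i) \<and> sets (D i) = sets borel) \<longrightarrow>
       (let s = (step P (cdf_oracle D) ^^ (c * (ens_size ts + 1)\<^sup>2)) (init_state d ts x S)
        in halted P s \<and> rreg s 0 = PG2 ts x S D)"
proof (intro exI[of _ "compile 0 PROG @ [Halt]"] exI[of _ step_const] allI impI)
  fix d ts x S and D :: "nat \<Rightarrow> real measure"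
  assume "wf_ensemble d ts \<and> S \<subseteq> {1..d} \<and> (\<forall>i\<in>S. prob_space (D i) \<and> sets (D i) = sets borel)"
  then have "pg_setting d ts S D"
    unfolding pg_setting_def by blast
  then show "let s = (step (compile 0 PROG @ [Halt]) (cdf_oracle D) ^^ (step_const * (ens_size ts + 1)\<^sup>2)) (init_state d ts x S)
        in halted (compile 0 PROG @ [Halt]) s \<and> rreg s 0 = PG2 ts x S D"
    by (rule pg_setting.PROG_correct)
qed

end
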